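(* Let $\Lambda^\omega$ be the set of germs at $o=(0,0)$ of maps $F(x,y)=(f(x,y),x,y)$ into $\mathbf{R}^3_1$, where $f$ is a real analytic function germ at $o$ with $f(0,0)=0$, $f_x(0,0)=0$, $f_y(0,0)=1$, such that $B_F:=1-f_x^2-f_y^2$ vanishes identically. Let $C^\omega_o(\mathbf{R},0_2)$ be the set of germs at $0$ of real analytic functions $\psi$ with $\psi(0)=\psi'(0)=0$. Then the map $\Lambda^\omega\ni F\mapsto f(x,0)\in C^\omega_o(\mathbf{R},0_2)$ is bijective.
   Context: $\mathbf{R}^3_1$ is Lorentz–Minkowski 3-space with coordinates $(t,x,y)$ and inner product $-dt^2+dx^2+dy^2$; elements of $\Lambda^\omega$ are light-like (degenerate) real analytic surface germs written as graphs over the $xy$-plane. *)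

theory Defs
  imports "HOL-Analysis.Analysis"
begin

definition real_analytic_at0_1 :: "(real \<Rightarrow> real) \<Rightarrow> bool" where
  "real_analytic_at0_1 \<psi> \<longleftrightarrow>
     (\<exists>r>0. \<exists>a :: nat \<Rightarrow> real. \<forall>x. \<bar>x\<bar> < r \<longrightarrow>
        ((\<lambda>i. a i * x ^ i) has_sum \<psi> x) UNIV)"

definition real_analytic_at0_2 :: "(real \<times> real \<Rightarrow> real) \<Rightarrow> bool" where
  "real_analytic_at0_2 f \<longleftrightarrow>
     (\<exists>r>0. \<exists>a :: nat \<Rightarrow> nat \<Rightarrow> real. \<forall>x y. \<bar>x\<bar> < r \<and> \<bar>y\<bar> < r \<longrightarrow>
        ((\<lambda>(i, j). a i j * x ^ i * y ^ j) has_sum f (x, y)) UNIV)"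

definition pdx :: "(real \<times> real \<Rightarrow> real) \<Rightarrow> real \<times> real \<Rightarrow> real" where
  "pdx f p = deriv (\<lambda>s. f (s, snd p)) (fst p)"

definition pdy :: "(real \<times> real \<Rightarrow> real) \<Rightarrow> real \<times> real \<Rightarrow> real" where
  "pdy f p = deriv (\<lambda>t. f (fst p, t)) (snd p)"

text \<open>The defining function f of an element F = (f,x,y) of Lambda^omega
  (light-like graph: B_F = 1 - f_x^2 - f_y^2 vanishes identically as a germ).\<close>
definition Lambda_omega :: "(real \<times> real \<Rightarrow> real) set" where
  "Lambda_omega = {f. real_analytic_at0_2 f \<and> f (0, 0) = 0 \<and>
      pdx f (0, 0) = 0 \<and> pdy f (0, 0) = 1 \<and>
      (\<forall>\<^sub>F p in nhds (0, 0). 1 - (pdx f p)\<^sup>2 - (pdy f p)\<^sup>2 = 0)}"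

definition C_omega_02 :: "(real \<Rightarrow> real) set" where
  "C_omega_02 = {\<psi>. real_analytic_at0_1 \<psi> \<and> \<psi> 0 = 0 \<and> deriv \<psi> 0 = 0}"

end

(*
  Write f(x,y) = sum_j c_j(x) y^j. Comparing coefficients of y^j in the eikonal equation
  f_x^2 + f_y^2 = 1 gives a convolution identity in which c_{j+1} enters only through
  2 c_1 (j+1) c_{j+1}; since c_1(x) = f_y(x,0) > 0 near 0, every c_j is determined by
  c_0(x) = f(x,0). This is injectivity.

  Conversely, given psi put p = psi', q = sqrt(1 - p^2), r = p/q, w = 1/q, and let
  s = S(x,y) be the root of s + y r(s) = x near 0. Then f(x,y) = psi(s) + y w(s)
  satisfies f(x,0) = psi(x), f_x = p(s) and f_y = q(s), so f_x^2 + f_y^2 = 1: the graph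
  is ruled by the light-like lines through (psi(s), s, 0). That f is analytic follows
  from the Lagrange-type formula
    H(s) = 1/(2 pi i) * contour_integral H(z) (1 + y R'(z)) / (z - x + y R(z)) dz,
  with R, H holomorphic extensions of r and of psi or w, whose integrand expands as
  a double power series in (x, y).
*)

theory Submission
  imports Defs "HOL-Complex_Analysis.Complex_Analysis"
begin

definition powser_on :: "(nat \<Rightarrow> real) \<Rightarrow> real \<Rightarrow> (real \<Rightarrow> real) \<Rightarrow> bool" where
  "powser_on b r f \<longleftrightarrow> (\<forall>x. \<bar>x\<bar> < r \<longrightarrow> ((\<lambda>i. b i * x ^ i) has_sum f x) UNIV)"

lemma has_sum_nat_imp_abs_summable:
  fixes g :: "nat \<Rightarrow> real"
  assumes "(g has_sum s) UNIV"
  shows "summable (\<lambda>n. \<bar>g n\<bar>)"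
proof -
  have "(\<lambda>n. norm (g n)) summable_on UNIV"
    using assms summable_on_iff_abs_summable_on_real by (auto simp: summable_on_def)
  then show ?thesis by (simp add: summable_on_UNIV_nonneg_real_iff)
qed

lemma powser_on_summable:
  assumes "powser_on b r f" "\<bar>x\<bar> < r"
  shows "summable (\<lambda>n. \<bar>b n\<bar> * \<bar>x\<bar> ^ n)" "summable (\<lambda>n. b n * x ^ n)"
proof -
  have h: "((\<lambda>i. b i * x ^ i) has_sum f x) UNIV" using assms unfolding powser_on_def by auto
  from has_sum_nat_imp_abs_summable[OF h] show "summable (\<lambda>n. \<bar>b n\<bar> * \<bar>x\<bar> ^ n)"
    by (simp add: abs_mult power_abs)
  from has_sum_imp_sums[OF h] show "summable (\<lambda>n. b n * x ^ n)" by (simp add: sums_summable)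
qed

lemma powser_on_eq_suminf:
  assumes "powser_on b r f" "\<bar>x\<bar> < r"
  shows "f x = (\<Sum>n. b n * x ^ n)"
proof -
  have "((\<lambda>i. b i * x ^ i) has_sum f x) UNIV" using assms unfolding powser_on_def by auto
  then show ?thesis by (simp add: has_sum_imp_sums sums_unique)
qed

lemma powser_on_has_real_derivative:
  assumes "powser_on b r f" "\<bar>x\<bar> < r"
  shows "(f has_real_derivative (\<Sum>i. diffs b i * x ^ i)) (at x)"
proof -
  define K where "K = (\<bar>x\<bar> + r) / 2"
  have K: "\<bar>x\<bar> < K" "K < r" using assms(2) by (auto simp: K_def)
  have "summable (\<lambda>n. b n * K ^ n)" using powser_on_summable(2)[OF assms(1), of K] K by auto
  then have "DERIV (\<lambda>x. \<Sum>n. b n * x ^ n) x :> (\<Sum>n. diffs b n * x ^ n)"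
    by (rule termdiffs_strong) (use K in auto)
  then show ?thesis
    by (rule has_field_derivative_transform_within_open[of _ _ _ "ball 0 r"])
       (use assms powser_on_eq_suminf[OF assms(1)] in \<open>auto simp: dist_real_def\<close>)
qed

lemma powser_on_diffs:
  assumes "powser_on b r f"
  shows "powser_on (diffs b) r (\<lambda>x. \<Sum>i. diffs b i * x ^ i)"
  unfolding powser_on_def
proof (intro allI impI)
  fix z :: real assume z: "\<bar>z\<bar> < r"
  have "summable (\<lambda>n. \<bar>b n\<bar> * x ^ n)" if "norm x < r" for x :: real
  proof -
    have "summable (\<lambda>n. \<bar>b n\<bar> * \<bar>x\<bar> ^ n)" using powser_on_summable(1)[OF assms, of x] that by auto
    then show ?thesis
      by (rule summable_comparison_test[rotated]) (auto simp: abs_mult power_abs intro!: exI[of _ 0])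
  qed
  then have "summable (\<lambda>n. diffs (\<lambda>n. \<bar>b n\<bar>) n * \<bar>z\<bar> ^ n)"
    by (intro termdiff_converges[of _ r]) (use z in auto)
  then have abs: "summable (\<lambda>n. norm (diffs b n * z ^ n))"
    by (simp add: diffs_def abs_mult power_abs)
  show "((\<lambda>i. diffs b i * z ^ i) has_sum (\<Sum>i. diffs b i * z ^ i)) UNIV"
    by (rule norm_summable_imp_has_sum[OF abs summable_sums[OF summable_norm_cancel[OF abs]]])
qed

lemma powser_on_at_0: "powser_on b r f \<Longrightarrow> 0 < r \<Longrightarrow> f 0 = b 0"
  using powser_on_eq_suminf[of b r f 0] by simp

lemma powser_sums_zero_imp_coeff_zero:
  fixes c :: "nat \<Rightarrow> real"
  assumes "0 < \<delta>" "\<And>y. \<bar>y\<bar> < \<delta> \<Longrightarrow> (\<lambda>k. c k * y ^ k) sums 0"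
  shows "c n = 0"
proof (rule ccontr)
  assume cn: "c n \<noteq> 0"
  have "c 0 = 0" using assms(2)[of 0] assms(1) by simp
  with cn have n: "n > 0" by (cases n) auto
  have sums: "(\<lambda>k. c k * (x - 0) ^ k) sums 0" if "norm (x - 0) < \<delta>" for x :: real
    using assms(2)[of x] that by simp
  have f0: "(\<lambda>_::real. 0::real) 0 = 0" by simp
  obtain s :: real where s: "0 < s" and nz: "\<And>z::real. z \<in> cball 0 s - {0} \<Longrightarrow> 0 \<noteq> (0::real)"
    using powser_0_nonzero[OF assms(1) sums f0 cn n] by blast
  have "s \<in> cball 0 s - {0}" using s by simp
  from nz[OF this] show False by simp
qed

definition powser2_on :: "(nat \<Rightarrow> nat \<Rightarrow> real) \<Rightarrow> real \<Rightarrow> (real \<times> real \<Rightarrow> real) \<Rightarrow> bool" where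
  "powser2_on a r f \<longleftrightarrow> (\<forall>x y. \<bar>x\<bar> < r \<and> \<bar>y\<bar> < r \<longrightarrow>
      ((\<lambda>(i, j). a i j * x ^ i * y ^ j) has_sum f (x, y)) UNIV)"

definition ycoeff :: "(nat \<Rightarrow> nat \<Rightarrow> real) \<Rightarrow> real \<Rightarrow> nat \<Rightarrow> real" where
  "ycoeff a x j = (\<Sum>\<^sub>\<infinity>i. a i j * x ^ i)"

lemma powser2_on_mono: "powser2_on a r f \<Longrightarrow> r' \<le> r \<Longrightarrow> powser2_on a r' f"
  unfolding powser2_on_def by auto

lemma has_sum_swap_pairs:
  "((\<lambda>(i, j). f i j) has_sum S) UNIV \<longleftrightarrow> ((\<lambda>(j, i). f i j) has_sum S) UNIV"
proof -
  have "bij_betw prod.swap (UNIV::('a \<times> 'b) set) UNIV" by (simp add: bij_betwI')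
  from has_sum_reindex_bij_betw[OF this, of "\<lambda>(j, i). f i j" S] show ?thesis
    by (simp add: split_beta')
qed

lemma powser2_on_swap:
  assumes "powser2_on a r f"
  shows "powser2_on (\<lambda>i j. a j i) r (\<lambda>p. f (snd p, fst p))"
  unfolding powser2_on_def
proof (intro allI impI)
  fix x y :: real assume "\<bar>x\<bar> < r \<and> \<bar>y\<bar> < r"
  then have "((\<lambda>(i, j). a i j * y ^ i * x ^ j) has_sum f (y, x)) UNIV"
    using assms unfolding powser2_on_def by auto
  then have "((\<lambda>(j, i). a i j * y ^ i * x ^ j) has_sum f (y, x)) UNIV"
    using has_sum_swap_pairs by blast
  then show "((\<lambda>(i, j). a j i * x ^ i * y ^ j) has_sum f (snd (x, y), fst (x, y))) UNIV"
    by (simp add: mult_ac)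
qed

lemma powser2_on_ycoeff_summable:
  assumes "powser2_on a r f" "\<bar>x\<bar> < r"
  shows "(\<lambda>i. a i j * x ^ i) summable_on UNIV"
proof -
  define y where "y = r / 2"
  have y: "\<bar>y\<bar> < r" "y \<noteq> 0" using assms(2) by (auto simp: y_def)
  have "((\<lambda>(i, j). a i j * x ^ i * y ^ j) has_sum f (x, y)) UNIV"
    using assms y unfolding powser2_on_def by auto
  then have "(\<lambda>(j, i). a i j * x ^ i * y ^ j) summable_on (Sigma UNIV (\<lambda>_. UNIV))"
    using has_sum_swap_pairs by (auto simp: summable_on_def)
  from summable_on_SigmaD1[OF this, of j]
  have "(\<lambda>i. a i j * x ^ i * y ^ j) summable_on UNIV" by simp
  from summable_on_cmult_left[OF this, of "inverse (y ^ j)"] show ?thesis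
    using y by (simp add: mult.assoc)
qed

lemma powser2_on_ycoeff:
  assumes "powser2_on a r f"
  shows "powser_on (\<lambda>i. a i j) r (\<lambda>x. ycoeff a x j)"
  unfolding powser_on_def ycoeff_def using powser2_on_ycoeff_summable[OF assms] by auto

lemma powser2_on_row:
  assumes "powser2_on a r f" "\<bar>x\<bar> < r"
  shows "powser_on (ycoeff a x) r (\<lambda>y. f (x, y))"
  unfolding powser_on_def
proof (intro allI impI)
  fix y :: real assume y: "\<bar>y\<bar> < r"
  have "((\<lambda>(i, j). a i j * x ^ i * y ^ j) has_sum f (x, y)) UNIV"
    using assms y unfolding powser2_on_def by auto
  then have "((\<lambda>(j, i). a i j * x ^ i * y ^ j) has_sum f (x, y)) (Sigma UNIV (\<lambda>_. UNIV))"
    using has_sum_swap_pairs by auto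
  then have h: "((\<lambda>p. a (snd p) (fst p) * x ^ snd p * y ^ fst p) has_sum f (x, y))
      (Sigma UNIV (\<lambda>_. UNIV))"
    by (simp add: split_beta')
  show "((\<lambda>j. ycoeff a x j * y ^ j) has_sum f (x, y)) UNIV"
  proof (rule has_sum_SigmaD[OF h])
    fix j :: nat
    have "((\<lambda>i. a i j * x ^ i) has_sum ycoeff a x j) UNIV"
      unfolding ycoeff_def using powser2_on_ycoeff_summable[OF assms] by auto
    from has_sum_cmult_left[OF this, of "y ^ j"]
    show "((\<lambda>i. a (snd (j, i)) (fst (j, i)) * x ^ snd (j, i) * y ^ fst (j, i))
        has_sum ycoeff a x j * y ^ j) UNIV"
      by simp
  qed
qed

lemma powser2_on_column:
  assumes "powser2_on a r f" "\<bar>y\<bar> < r"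
  shows "powser_on (ycoeff (\<lambda>i j. a j i) y) r (\<lambda>x. f (x, y))"
  using powser2_on_row[OF powser2_on_swap[OF assms(1)] assms(2)] by simp

lemma powser2_on_coeff_bound:
  assumes "powser2_on a r f" "0 < \<rho>" "\<rho> < r"
  obtains B where "\<And>i j. \<bar>a i j\<bar> * \<rho> ^ i * \<rho> ^ j \<le> B"
proof -
  let ?g = "\<lambda>(i, j). a i j * \<rho> ^ i * \<rho> ^ j"
  have "(?g has_sum f (\<rho>, \<rho>)) UNIV" using assms unfolding powser2_on_def by auto
  then have s: "(\<lambda>p. \<bar>?g p\<bar>) summable_on UNIV"
    using summable_on_iff_abs_summable_on_real by (auto simp: summable_on_def)
  have "\<bar>a i j\<bar> * \<rho> ^ i * \<rho> ^ j \<le> (\<Sum>\<^sub>\<infinity>p. \<bar>?g p\<bar>)" for i j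
  proof -
    have "(\<Sum>\<^sub>\<infinity>p\<in>{(i, j)}. \<bar>?g p\<bar>) \<le> (\<Sum>\<^sub>\<infinity>p. \<bar>?g p\<bar>)"
      by (rule infsum_mono_neutral) (use s in auto)
    then show ?thesis using assms(2) by (simp add: abs_mult)
  qed
  then show ?thesis by (rule that)
qed

lemma summable_Suc_times_power:
  fixes t :: real assumes "0 \<le> t" "t < 1"
  shows "summable (\<lambda>n. real (Suc n) * t ^ n)"
proof -
  have "summable (\<lambda>n. diffs (\<lambda>_. 1::real) n * t ^ n)"
    by (rule termdiff_converges[of _ 1]) (use assms in \<open>auto intro!: summable_geometric\<close>)
  then show ?thesis by (simp add: diffs_def)
qed

lemma summable_on_product_nonneg:
  fixes g h :: "nat \<Rightarrow> real"
  assumes "summable g" "summable h" "\<And>n. g n \<ge> 0" "\<And>n. h n \<ge> 0"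
  shows "(\<lambda>(i, j). g i * h j) summable_on UNIV"
proof -
  have hg: "(g has_sum suminf g) UNIV" and hh: "(h has_sum suminf h) UNIV"
    using assms by (auto intro!: norm_summable_imp_has_sum summable_sums)
  have "(\<lambda>p. g (fst p) * h (snd p)) summable_on (Sigma UNIV (\<lambda>_. UNIV))"
  proof (rule summable_on_SigmaI)
    show "((\<lambda>j. g (fst (i, j)) * h (snd (i, j))) has_sum g i * suminf h) UNIV" for i
      using has_sum_cmult_right[OF hh, of "g i"] by simp
    show "(\<lambda>i. g i * suminf h) summable_on UNIV"
      using has_sum_cmult_left[OF hg, of "suminf h"] by (auto simp: summable_on_def)
  qed (use assms in auto)
  then show ?thesis by (simp add: split_beta')
qed

definition powser2_dx :: "(nat \<Rightarrow> nat \<Rightarrow> real) \<Rightarrow> real \<times> real \<Rightarrow> real" where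
  "powser2_dx a p = (\<Sum>i. diffs (ycoeff (\<lambda>i j. a j i) (snd p)) i * fst p ^ i)"

definition powser2_dy :: "(nat \<Rightarrow> nat \<Rightarrow> real) \<Rightarrow> real \<times> real \<Rightarrow> real" where
  "powser2_dy a p = (\<Sum>j. diffs (ycoeff a (fst p)) j * snd p ^ j)"

lemma powser2_dx_has_derivative:
  assumes "powser2_on a r f" "\<bar>x\<bar> < r" "\<bar>y\<bar> < r"
  shows "((\<lambda>t. f (t, y)) has_real_derivative powser2_dx a (x, y)) (at x)"
  unfolding powser2_dx_def
  using powser_on_has_real_derivative[OF powser2_on_column[OF assms(1,3)] assms(2)] by simp

lemma powser2_dy_has_derivative:
  assumes "powser2_on a r f" "\<bar>x\<bar> < r" "\<bar>y\<bar> < r"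
  shows "((\<lambda>t. f (x, t)) has_real_derivative powser2_dy a (x, y)) (at y)"
  unfolding powser2_dy_def
  using powser_on_has_real_derivative[OF powser2_on_row[OF assms(1,2)] assms(3)] by simp

lemma powser2_on_dx_abs_summable:
  assumes "powser2_on a r f" "\<bar>x\<bar> < r" "\<bar>y\<bar> < r"
  shows "(\<lambda>(i, j). real (Suc i) * a (Suc i) j * x ^ i * y ^ j) summable_on UNIV"
proof -
  define \<rho> where "\<rho> = (max \<bar>x\<bar> \<bar>y\<bar> + r) / 2"
  have \<rho>: "0 < \<rho>" "\<rho> < r" "\<bar>x\<bar> < \<rho>" "\<bar>y\<bar> < \<rho>" using assms(2,3) by (auto simp: \<rho>_def)
  obtain B where B: "\<And>i j. \<bar>a i j\<bar> * \<rho> ^ i * \<rho> ^ j \<le> B"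
    using powser2_on_coeff_bound[OF assms(1) \<rho>(1,2)] by blast
  let ?h = "\<lambda>(i, j). real (Suc i) * a (Suc i) j * x ^ i * y ^ j"
  let ?m = "\<lambda>(i, j). B / \<rho> * (real (Suc i) * (\<bar>x\<bar> / \<rho>) ^ i) * (\<bar>y\<bar> / \<rho>) ^ j"
  have "summable (\<lambda>i. real (Suc i) * (\<bar>x\<bar> / \<rho>) ^ i)"
    by (rule summable_Suc_times_power) (use \<rho> in auto)
  moreover have "summable (\<lambda>j. (\<bar>y\<bar> / \<rho>) ^ j)"
    by (rule summable_geometric) (use \<rho> in auto)
  ultimately have "?m summable_on UNIV"
    using \<rho> B[of 0 0] by (intro summable_on_product_nonneg summable_mult) auto
  then have "(\<lambda>p. \<bar>?h p\<bar>) summable_on UNIV"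
  proof (rule summable_on_comparison_test)
    fix p :: "nat \<times> nat"
    obtain i j where p: "p = (i, j)" by force
    have "\<bar>a (Suc i) j\<bar> \<le> B / (\<rho> ^ Suc i * \<rho> ^ j)"
      using B[of "Suc i" j] \<rho> by (simp add: field_simps)
    then have "\<bar>a (Suc i) j\<bar> * (real (Suc i) * \<bar>x\<bar> ^ i * \<bar>y\<bar> ^ j)
        \<le> B / (\<rho> ^ Suc i * \<rho> ^ j) * (real (Suc i) * \<bar>x\<bar> ^ i * \<bar>y\<bar> ^ j)"
      by (rule mult_right_mono) auto
    also have "\<dots> = B / \<rho> * (real (Suc i) * (\<bar>x\<bar> / \<rho>) ^ i) * (\<bar>y\<bar> / \<rho>) ^ j"
      using \<rho> by (simp add: field_simps power_divide)
    finally show "\<bar>?h p\<bar> \<le> ?m p"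
      by (simp add: p abs_mult power_abs mult_ac)
  qed simp
  then show ?thesis using summable_on_iff_abs_summable_on_real by auto
qed

lemma powser2_on_dx:
  assumes "powser2_on a r f"
  shows "powser2_on (\<lambda>i j. real (Suc i) * a (Suc i) j) r (powser2_dx a)"
  unfolding powser2_on_def
proof (intro allI impI)
  fix x y :: real assume xy: "\<bar>x\<bar> < r \<and> \<bar>y\<bar> < r"
  have "((\<lambda>p. real (Suc (fst p)) * a (Suc (fst p)) (snd p) * x ^ fst p * y ^ snd p)
      has_sum powser2_dx a (x, y)) (Sigma UNIV (\<lambda>_. UNIV))"
  proof (rule has_sum_SigmaI)
    fix i :: nat
    have "((\<lambda>j. a (Suc i) j * y ^ j) has_sum ycoeff (\<lambda>i j. a j i) y (Suc i)) UNIV"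
      using powser2_on_ycoeff_summable[OF powser2_on_swap[OF assms], of y "Suc i"] xy
      by (simp add: ycoeff_def)
    from has_sum_cmult_left[OF this, of "real (Suc i) * x ^ i"]
    show "((\<lambda>j. real (Suc (fst (i, j))) * a (Suc (fst (i, j))) (snd (i, j)) * x ^ fst (i, j)
        * y ^ snd (i, j)) has_sum diffs (ycoeff (\<lambda>i j. a j i) y) i * x ^ i) UNIV"
      by (simp add: diffs_def mult_ac)
  next
    show "((\<lambda>i. diffs (ycoeff (\<lambda>i j. a j i) y) i * x ^ i) has_sum powser2_dx a (x, y)) UNIV"
      using powser_on_diffs[OF powser2_on_column[OF assms, of y]] xy
      unfolding powser_on_def powser2_dx_def by auto
  next
    show "(\<lambda>p. real (Suc (fst p)) * a (Suc (fst p)) (snd p) * x ^ fst p * y ^ snd p)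
        summable_on Sigma UNIV (\<lambda>_. UNIV)"
      using powser2_on_dx_abs_summable[OF assms] xy by (simp add: split_beta')
  qed
  then show "((\<lambda>(i, j). real (Suc i) * a (Suc i) j * x ^ i * y ^ j) has_sum powser2_dx a (x, y)) UNIV"
    by (simp add: split_beta')
qed

lemma powser2_on_dy:
  assumes "powser2_on a r f"
  shows "powser2_on (\<lambda>i j. real (Suc j) * a i (Suc j)) r (powser2_dy a)"
proof -
  have "powser2_on (\<lambda>i j. real (Suc i) * a j (Suc i)) r (powser2_dx (\<lambda>i j. a j i))"
    using powser2_on_dx[OF powser2_on_swap[OF assms]] by simp
  from powser2_on_swap[OF this] show ?thesis
    by (simp add: powser2_dx_def powser2_dy_def[abs_def])
qed

lemma ycoeff_has_derivative:
  assumes "powser2_on a r f" "\<bar>x\<bar> < r"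
  shows "((\<lambda>t. ycoeff a t j) has_real_derivative ycoeff (\<lambda>i j. real (Suc i) * a (Suc i) j) x j) (at x)"
proof -
  have "((\<lambda>i. diffs (\<lambda>i. a i j) i * x ^ i) has_sum (\<Sum>i. diffs (\<lambda>i. a i j) i * x ^ i)) UNIV"
    using powser_on_diffs[OF powser2_on_ycoeff[OF assms(1)]] assms(2) unfolding powser_on_def by auto
  then have "ycoeff (\<lambda>i j. real (Suc i) * a (Suc i) j) x j = (\<Sum>i. diffs (\<lambda>i. a i j) i * x ^ i)"
    unfolding ycoeff_def diffs_def by (simp add: infsumI mult_ac)
  with powser_on_has_real_derivative[OF powser2_on_ycoeff[OF assms(1)] assms(2)] show ?thesis
    by simp
qed

lemma ycoeff_dy:
  "ycoeff (\<lambda>i j. real (Suc j) * a i (Suc j)) x j = real (Suc j) * ycoeff a x (Suc j)"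
  unfolding ycoeff_def by (simp add: mult.assoc infsum_cmult_right')

lemma powser_on_square_sums:
  assumes "powser_on b r f" "\<bar>y\<bar> < r"
  shows "(\<lambda>k. (\<Sum>i\<le>k. b i * b (k - i)) * y ^ k) sums (f y)\<^sup>2"
proof -
  have s: "summable (\<lambda>k. norm (b k * y ^ k))"
    using powser_on_summable(1)[OF assms] by (simp add: abs_mult power_abs)
  have "(\<lambda>k. \<Sum>i\<le>k. (b i * y ^ i) * (b (k - i) * y ^ (k - i))) sums
      ((\<Sum>k. b k * y ^ k) * (\<Sum>k. b k * y ^ k))"
    by (rule Cauchy_product_sums[OF s s])
  moreover have "(\<Sum>i\<le>k. (b i * y ^ i) * (b (k - i) * y ^ (k - i))) = (\<Sum>i\<le>k. b i * b (k - i)) * y ^ k"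
    for k
    unfolding sum_distrib_right
  proof (rule sum.cong)
    fix i assume "i \<in> {..k}"
    then have "y ^ i * y ^ (k - i) = y ^ k" by (simp flip: power_add)
    then show "(b i * y ^ i) * (b (k - i) * y ^ (k - i)) = b i * b (k - i) * y ^ k"
      by (metis mult.assoc mult.left_commute)
  qed simp
  ultimately show ?thesis
    using powser_on_eq_suminf[OF assms] by (simp add: power2_eq_square)
qed

text \<open>If \<open>f(x,y) = \<Sum>\<^sub>j c\<^sub>j(x) y\<^sup>j\<close>, then \<open>E\<close> and \<open>G\<close> are the \<open>y\<close>-coefficients of \<open>f\<^sub>x\<close> and
  \<open>f\<^sub>y\<close>, namely \<open>E j = c\<^sub>j'(x)\<close> and \<open>G j = (j + 1) c\<^sub>j\<^sub>+\<^sub>1(x)\<close>.\<close>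

lemma eikonal_ycoeff_identity:
  assumes f: "powser2_on a r f" and \<delta>: "0 < \<delta>" "\<delta> \<le> r" and x: "\<bar>x\<bar> < \<delta>"
    and eikonal: "\<And>y. \<bar>y\<bar> < \<delta> \<Longrightarrow> (powser2_dx a (x, y))\<^sup>2 + (powser2_dy a (x, y))\<^sup>2 = 1"
  defines "E \<equiv> ycoeff (\<lambda>i j. real (Suc i) * a (Suc i) j) x"
    and "G \<equiv> ycoeff (\<lambda>i j. real (Suc j) * a i (Suc j)) x"
  shows "(\<Sum>k\<le>j. E k * E (j - k) + G k * G (j - k)) = (if j = 0 then 1 else 0)"
proof -
  have xr: "\<bar>x\<bar> < r" using x \<delta> by auto
  have E: "powser_on E r (\<lambda>y. powser2_dx a (x, y))"
    unfolding E_def by (rule powser2_on_row[OF powser2_on_dx[OF f] xr])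
  have G: "powser_on G r (\<lambda>y. powser2_dy a (x, y))"
    unfolding G_def by (rule powser2_on_row[OF powser2_on_dy[OF f] xr])
  define c where "c = (\<lambda>k. (\<Sum>i\<le>k. E i * E (k - i) + G i * G (k - i)) - (if k = 0 then 1 else 0))"
  have "c j = 0"
  proof (rule powser_sums_zero_imp_coeff_zero[OF \<delta>(1)])
    fix y :: real assume y: "\<bar>y\<bar> < \<delta>"
    then have yr: "\<bar>y\<bar> < r" using \<delta> by auto
    have "(\<lambda>k. (\<Sum>i\<le>k. E i * E (k - i)) * y ^ k + (\<Sum>i\<le>k. G i * G (k - i)) * y ^ k) sums 1"
      using sums_add[OF powser_on_square_sums[OF E yr] powser_on_square_sums[OF G yr]] eikonal[OF y]
      by simp
    from sums_diff[OF this powser_sums_if[of 0 y]] show "(\<lambda>k. c k * y ^ k) sums 0"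
      by (simp add: c_def algebra_simps sum.distrib)
  qed
  then show ?thesis by (simp add: c_def)
qed

text \<open>In the self-convolution at index \<open>j > 0\<close> the unknown \<open>G j\<close> occurs only in the two
  boundary terms, each time multiplied by \<open>G 0 > 0\<close>.\<close>

lemma self_convolution_step_unique:
  fixes E G E' G' :: "nat \<Rightarrow> real"
  assumes E: "\<And>k. k \<le> j \<Longrightarrow> E k = E' k" and G: "\<And>k. k < j \<Longrightarrow> G k = G' k"
    and pos: "G 0 > 0" "G' 0 > 0"
    and conv: "(\<Sum>k\<le>j. E k * E (j - k) + G k * G (j - k)) = (\<Sum>k\<le>j. E' k * E' (j - k) + G' k * G' (j - k))"
  shows "G j = G' j"
proof (cases "j = 0")
  case True
  then have "(G 0)\<^sup>2 = (G' 0)\<^sup>2" using conv E[of 0] by (simp add: power2_eq_square)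
  with pos True show ?thesis by (simp add: power2_eq_iff_nonneg)
next
  case False
  define D where "D = G 0 * (G j - G' j)"
  have G0: "G 0 = G' 0" using G False by auto
  have "(\<Sum>k\<le>j. (E k * E (j - k) + G k * G (j - k)) - (E' k * E' (j - k) + G' k * G' (j - k)))
      = (\<Sum>k\<le>j. (if k = 0 then D else 0) + (if k = j then D else 0))"
  proof (rule sum.cong)
    fix k assume k: "k \<in> {..j}"
    then have "E k = E' k" "E (j - k) = E' (j - k)" using E by auto
    moreover have "G k = G' k" "G (j - k) = G' (j - k)" if "k \<noteq> 0" "k \<noteq> j"
      using G k that by auto
    ultimately show "(E k * E (j - k) + G k * G (j - k)) - (E' k * E' (j - k) + G' k * G' (j - k))
        = (if k = 0 then D else 0) + (if k = j then D else 0)"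
      using False G0 by (auto simp: D_def algebra_simps)
  qed simp
  also have "\<dots> = 2 * D" by (simp add: sum.distrib)
  finally have "D = 0" using conv by (simp add: sum_subtractf)
  with pos show ?thesis by (simp add: D_def)
qed

lemma has_real_derivative_unique_locally:
  assumes "(f has_real_derivative D) (at x)" "(g has_real_derivative D') (at x)"
    and "\<bar>x\<bar> < \<delta>" "\<And>t. \<bar>t\<bar> < \<delta> \<Longrightarrow> f t = g t"
  shows "D = D'"
proof -
  have "(g has_real_derivative D) (at x)"
    by (rule has_field_derivative_transform_within_open[OF assms(1), of "ball 0 \<delta>"])
       (use assms in \<open>auto simp: dist_real_def\<close>)
  then show ?thesis using assms(2) by (rule DERIV_unique)
qed

text \<open>Strong induction on \<open>n\<close>: if \<open>c\<^sub>0, \<dots>, c\<^sub>n\<close> agree near \<open>0\<close>, so do their derivatives,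
  and the coefficient identity at index \<open>n\<close> then fixes \<open>c\<^sub>n\<^sub>+\<^sub>1\<close>.\<close>

lemma eikonal_ycoeff_unique:
  assumes f: "powser2_on a r f" and g: "powser2_on b r g" and \<delta>: "0 < \<delta>" "\<delta> \<le> r"
    and eik_f: "\<And>x y. \<bar>x\<bar> < \<delta> \<Longrightarrow> \<bar>y\<bar> < \<delta> \<Longrightarrow> (powser2_dx a (x, y))\<^sup>2 + (powser2_dy a (x, y))\<^sup>2 = 1"
    and eik_g: "\<And>x y. \<bar>x\<bar> < \<delta> \<Longrightarrow> \<bar>y\<bar> < \<delta> \<Longrightarrow> (powser2_dx b (x, y))\<^sup>2 + (powser2_dy b (x, y))\<^sup>2 = 1"
    and pos_f: "\<And>x. \<bar>x\<bar> < \<delta> \<Longrightarrow> ycoeff a x 1 > 0"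
    and pos_g: "\<And>x. \<bar>x\<bar> < \<delta> \<Longrightarrow> ycoeff b x 1 > 0"
    and c0: "\<And>x. \<bar>x\<bar> < \<delta> \<Longrightarrow> ycoeff a x 0 = ycoeff b x 0"
  shows "\<bar>x\<bar> < \<delta> \<Longrightarrow> ycoeff a x n = ycoeff b x n"
proof (induction n arbitrary: x rule: less_induct)
  case (less n)
  show ?case
  proof (cases n)
    case 0 with c0 less.prems show ?thesis by simp
  next
    case (Suc j)
    let ?E = "\<lambda>a. ycoeff (\<lambda>i j. real (Suc i) * a (Suc i) j) x"
    let ?G = "\<lambda>a. ycoeff (\<lambda>i j. real (Suc j) * a i (Suc j)) x"
    have xr: "\<bar>x\<bar> < r" using less.prems \<delta> by auto
    have E: "?E a k = ?E b k" if "k \<le> j" for k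
      by (rule has_real_derivative_unique_locally[OF ycoeff_has_derivative[OF f xr]
            ycoeff_has_derivative[OF g xr] less.prems])
         (use less.IH Suc that in auto)
    have G: "?G a k = ?G b k" if "k < j" for k
      unfolding ycoeff_dy using less.IH[of "Suc k" x] less.prems Suc that by simp
    have "?G a j = ?G b j"
    proof (rule self_convolution_step_unique[OF E G])
      show "?G a 0 > 0" "?G b 0 > 0"
        unfolding ycoeff_dy using pos_f[OF less.prems] pos_g[OF less.prems] by simp_all
      show "(\<Sum>k\<le>j. ?E a k * ?E a (j - k) + ?G a k * ?G a (j - k))
          = (\<Sum>k\<le>j. ?E b k * ?E b (j - k) + ?G b k * ?G b (j - k))"
        using eikonal_ycoeff_identity[OF f \<delta> less.prems eik_f]
          eikonal_ycoeff_identity[OF g \<delta> less.prems eik_g] less.prems by simp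
    qed
    then show ?thesis unfolding ycoeff_dy using Suc by simp
  qed
qed

lemma eventually_nhds_0_square_iff:
  "(\<forall>\<^sub>F p in nhds (0::real, 0::real). P p) \<longleftrightarrow>
    (\<exists>d>0. \<forall>x y. \<bar>x\<bar> < d \<longrightarrow> \<bar>y\<bar> < d \<longrightarrow> P (x, y))"
proof
  assume "\<forall>\<^sub>F p in nhds (0, 0). P p"
  then obtain e where e: "e > 0" "\<And>p. dist p (0, 0) < e \<Longrightarrow> P p"
    unfolding eventually_nhds_metric by auto
  have "dist (x, y) (0, 0) < e" if "\<bar>x\<bar> < e / 2" "\<bar>y\<bar> < e / 2" for x y :: real
  proof -
    have "dist (x, y) (0, 0) = sqrt (x\<^sup>2 + y\<^sup>2)" by (simp add: dist_Pair_Pair dist_real_def)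
    also have "\<dots> \<le> sqrt ((\<bar>x\<bar> + \<bar>y\<bar>)\<^sup>2)"
      by (rule real_sqrt_le_mono) (auto simp: power2_eq_square algebra_simps)
    finally show ?thesis using that by simp
  qed
  with e show "\<exists>d>0. \<forall>x y. \<bar>x\<bar> < d \<longrightarrow> \<bar>y\<bar> < d \<longrightarrow> P (x, y)"
    by (intro exI[of _ "e / 2"]) auto
next
  assume "\<exists>d>0. \<forall>x y. \<bar>x\<bar> < d \<longrightarrow> \<bar>y\<bar> < d \<longrightarrow> P (x, y)"
  then obtain d where "d > 0" and d: "\<And>x y. \<bar>x\<bar> < d \<Longrightarrow> \<bar>y\<bar> < d \<Longrightarrow> P (x, y)" by blast
  have "P p" if "dist p (0, 0) < d" for p
  proof (cases p)
    case (Pair x y)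
    have "\<bar>x\<bar> \<le> dist (x, y) (0, 0)" "\<bar>y\<bar> \<le> dist (x, y) (0, 0)"
      by (simp_all add: dist_Pair_Pair dist_real_def real_sqrt_sum_squares_ge1 real_sqrt_sum_squares_ge2)
    with Pair that show ?thesis using d[of x y] by simp
  qed
  with \<open>d > 0\<close> show "\<forall>\<^sub>F p in nhds (0, 0). P p"
    unfolding eventually_nhds_metric by blast
qed

lemma powser2_on_imp_real_analytic_at0_2: "powser2_on a r f \<Longrightarrow> 0 < r \<Longrightarrow> real_analytic_at0_2 f"
  unfolding real_analytic_at0_2_def powser2_on_def by blast

lemma Lambda_omega_powser2:
  assumes "f \<in> Lambda_omega"
  obtains a r where "r > 0" "powser2_on a r f"
  using assms unfolding Lambda_omega_def real_analytic_at0_2_def powser2_on_def by auto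

lemma pdx_powser2: "powser2_on a r f \<Longrightarrow> \<bar>x\<bar> < r \<Longrightarrow> \<bar>y\<bar> < r \<Longrightarrow> pdx f (x, y) = powser2_dx a (x, y)"
  unfolding pdx_def using powser2_dx_has_derivative DERIV_imp_deriv by fastforce

lemma pdy_powser2: "powser2_on a r f \<Longrightarrow> \<bar>x\<bar> < r \<Longrightarrow> \<bar>y\<bar> < r \<Longrightarrow> pdy f (x, y) = powser2_dy a (x, y)"
  unfolding pdy_def using powser2_dy_has_derivative DERIV_imp_deriv by fastforce

lemma Lambda_omega_restrict_x_axis:
  assumes "f \<in> Lambda_omega"
  shows "(\<lambda>x. f (x, 0)) \<in> C_omega_02"
proof -
  obtain a r where r: "r > 0" and f: "powser2_on a r f" using Lambda_omega_powser2[OF assms] .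
  have "powser_on (ycoeff (\<lambda>i j. a j i) 0) r (\<lambda>x. f (x, 0))" using powser2_on_column[OF f] r by simp
  then have "real_analytic_at0_1 (\<lambda>x. f (x, 0))"
    unfolding real_analytic_at0_1_def powser_on_def using r by blast
  moreover have "f (0, 0) = 0" "pdx f (0, 0) = 0" using assms unfolding Lambda_omega_def by auto
  ultimately show ?thesis unfolding C_omega_02_def pdx_def by auto
qed

lemma ycoeff_1_eventually_pos:
  assumes f: "powser2_on a r f" and r: "r > 0" and fy: "pdy f (0, 0) = 1"
  shows "\<forall>\<^sub>F x in nhds 0. ycoeff a x 1 > 0"
proof -
  have "isCont (\<lambda>x. ycoeff a x 1) 0"
    using ycoeff_has_derivative[OF f, of 0 1] r DERIV_isCont by auto
  then have lim: "((\<lambda>x. ycoeff a x 1) \<longlongrightarrow> ycoeff a 0 1) (nhds 0)"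
    by (metis isCont_def tendsto_at_iff_tendsto_nhds)
  have "ycoeff a 0 1 = 1"
    using pdy_powser2[OF f, of 0 0] r fy by (simp add: powser2_dy_def diffs_def)
  then show ?thesis using order_tendstoD(1)[OF lim, of 0] by simp
qed

lemma Lambda_omega_unique:
  assumes f: "f \<in> Lambda_omega" and g: "g \<in> Lambda_omega"
    and fg: "\<forall>\<^sub>F x in nhds 0. f (x, 0) = g (x, 0)"
  shows "\<forall>\<^sub>F p in nhds (0, 0). f p = g p"
proof -
  obtain a r1 where r1: "r1 > 0" and a: "powser2_on a r1 f" using Lambda_omega_powser2[OF f] .
  obtain b r2 where r2: "r2 > 0" and b: "powser2_on b r2 g" using Lambda_omega_powser2[OF g] .
  have eik_f: "\<forall>\<^sub>F p in nhds (0, 0). 1 - (pdx f p)\<^sup>2 - (pdy f p)\<^sup>2 = 0" and fy: "pdy f (0, 0) = 1"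
    using f by (simp_all add: Lambda_omega_def)
  have eik_g: "\<forall>\<^sub>F p in nhds (0, 0). 1 - (pdx g p)\<^sup>2 - (pdy g p)\<^sup>2 = 0" and gy: "pdy g (0, 0) = 1"
    using g by (simp_all add: Lambda_omega_def)
  have "\<forall>\<^sub>F p in nhds (0, 0). 1 - (pdx f p)\<^sup>2 - (pdy f p)\<^sup>2 = 0 \<and> 1 - (pdx g p)\<^sup>2 - (pdy g p)\<^sup>2 = 0"
    using eik_f eik_g by (rule eventually_conj)
  then obtain d1 where d1: "d1 > 0"
    and eik: "\<And>x y. \<bar>x\<bar> < d1 \<Longrightarrow> \<bar>y\<bar> < d1 \<Longrightarrow>
      1 - (pdx f (x, y))\<^sup>2 - (pdy f (x, y))\<^sup>2 = 0 \<and> 1 - (pdx g (x, y))\<^sup>2 - (pdy g (x, y))\<^sup>2 = 0"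
    unfolding eventually_nhds_0_square_iff by blast
  have "\<forall>\<^sub>F x in nhds 0. f (x, 0) = g (x, 0) \<and> ycoeff a x 1 > 0 \<and> ycoeff b x 1 > 0"
    using fg ycoeff_1_eventually_pos[OF a r1 fy] ycoeff_1_eventually_pos[OF b r2 gy]
    by (intro eventually_conj)
  then obtain d2 where d2: "d2 > 0"
    and axis: "\<And>x. \<bar>x\<bar> < d2 \<Longrightarrow> f (x, 0) = g (x, 0) \<and> ycoeff a x 1 > 0 \<and> ycoeff b x 1 > 0"
    unfolding eventually_nhds_metric dist_real_def by auto
  define \<delta> where "\<delta> = Min {r1, r2, d1, d2}"
  have \<delta>: "0 < \<delta>" "\<delta> \<le> r1" "\<delta> \<le> r2" "\<delta> \<le> d1" "\<delta> \<le> d2"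
    using r1 r2 d1 d2 by (auto simp: \<delta>_def)
  have a\<delta>: "powser2_on a \<delta> f" and b\<delta>: "powser2_on b \<delta> g"
    using powser2_on_mono[OF a \<delta>(2)] powser2_on_mono[OF b \<delta>(3)] .
  have ycoeff_eq: "ycoeff a x n = ycoeff b x n" if "\<bar>x\<bar> < \<delta>" for x n
  proof (rule eikonal_ycoeff_unique[OF a\<delta> b\<delta> \<delta>(1) order_refl _ _ _ _ _ that])
    show "(powser2_dx a (x, y))\<^sup>2 + (powser2_dy a (x, y))\<^sup>2 = 1" if "\<bar>x\<bar> < \<delta>" "\<bar>y\<bar> < \<delta>" for x y
      using eik[of x y] pdx_powser2[OF a\<delta> that] pdy_powser2[OF a\<delta> that] that \<delta> by auto
    show "(powser2_dx b (x, y))\<^sup>2 + (powser2_dy b (x, y))\<^sup>2 = 1" if "\<bar>x\<bar> < \<delta>" "\<bar>y\<bar> < \<delta>" for x y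
      using eik[of x y] pdx_powser2[OF b\<delta> that] pdy_powser2[OF b\<delta> that] that \<delta> by auto
    show "ycoeff a x 1 > 0" "ycoeff b x 1 > 0" if "\<bar>x\<bar> < \<delta>" for x
      using axis[of x] that \<delta> by auto
    show "ycoeff a x 0 = ycoeff b x 0" if "\<bar>x\<bar> < \<delta>" for x
      using powser_on_at_0[OF powser2_on_row[OF a\<delta> that] \<delta>(1)]
        powser_on_at_0[OF powser2_on_row[OF b\<delta> that] \<delta>(1)] axis[of x] that \<delta> by simp
  qed
  have "f (x, y) = g (x, y)" if "\<bar>x\<bar> < \<delta>" "\<bar>y\<bar> < \<delta>" for x y
    using powser_on_eq_suminf[OF powser2_on_row[OF a\<delta> that(1)] that(2)]
      powser_on_eq_suminf[OF powser2_on_row[OF b\<delta> that(1)] that(2)] ycoeff_eq[OF that(1)] by simp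
  then show ?thesis
    unfolding eventually_nhds_0_square_iff using \<delta>(1) by blast
qed

lemma contour_integrable_circlepath_sphere:
  "continuous_on (sphere 0 \<rho>) h \<Longrightarrow> 0 \<le> \<rho> \<Longrightarrow> h contour_integrable_on circlepath 0 \<rho>"
  by (rule contour_integrable_continuous_circlepath) simp

lemma contour_integral_circlepath_sums:
  fixes u :: "nat \<Rightarrow> complex \<Rightarrow> complex"
  assumes \<rho>: "0 < \<rho>" and u_cont: "\<And>k. continuous_on (sphere 0 \<rho>) (u k)"
    and u_le: "\<And>k \<zeta>. \<zeta> \<in> sphere 0 \<rho> \<Longrightarrow> norm (u k \<zeta>) \<le> M k" and M: "summable M"
  shows "(\<lambda>k. contour_integral (circlepath 0 \<rho>) (u k)) sums
    contour_integral (circlepath 0 \<rho>) (\<lambda>\<zeta>. \<Sum>k. u k \<zeta>)"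
proof -
  let ?\<gamma> = "circlepath 0 \<rho>"
  have unif: "uniform_limit (sphere 0 \<rho>) (\<lambda>n \<zeta>. \<Sum>k<n. u k \<zeta>) (\<lambda>\<zeta>. \<Sum>k. u k \<zeta>) sequentially"
    by (rule Weierstrass_m_test[OF _ M]) (use u_le in auto)
  have "(\<lambda>n. contour_integral ?\<gamma> (\<lambda>\<zeta>. \<Sum>k<n. u k \<zeta>)) \<longlonglongrightarrow> contour_integral ?\<gamma> (\<lambda>\<zeta>. \<Sum>k. u k \<zeta>)"
  proof (rule contour_integral_uniform_limit_circlepath(2)[OF _ unif _ \<rho>])
    show "\<forall>\<^sub>F n in sequentially. (\<lambda>\<zeta>. \<Sum>k<n. u k \<zeta>) contour_integrable_on ?\<gamma>"
      using u_cont \<rho>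
      by (intro always_eventually allI contour_integrable_circlepath_sphere continuous_on_sum) auto
  qed simp
  moreover have "contour_integral ?\<gamma> (\<lambda>\<zeta>. \<Sum>k<n. u k \<zeta>) = (\<Sum>k<n. contour_integral ?\<gamma> (u k))" for n
    by (rule contour_integral_sum)
       (use u_cont \<rho> in \<open>auto intro: contour_integrable_circlepath_sphere\<close>)
  ultimately show ?thesis by (simp add: sums_def)
qed

lemma contour_integral_geometric_sums:
  fixes G w :: "complex \<Rightarrow> complex"
  assumes \<rho>: "0 < \<rho>" and G: "continuous_on (sphere 0 \<rho>) G" and w: "continuous_on (sphere 0 \<rho>) w"
    and \<kappa>: "0 \<le> \<kappa>" "\<kappa> < 1" and w_le: "\<And>\<zeta>. \<zeta> \<in> sphere 0 \<rho> \<Longrightarrow> norm (w \<zeta>) \<le> \<kappa> * \<rho>"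
  shows "(\<lambda>k. contour_integral (circlepath 0 \<rho>) (\<lambda>\<zeta>. G \<zeta> * w \<zeta> ^ k / \<zeta> ^ Suc k)) sums
    contour_integral (circlepath 0 \<rho>) (\<lambda>\<zeta>. G \<zeta> / (\<zeta> - w \<zeta>))"
proof -
  let ?S = "sphere (0::complex) \<rho>"
  define u where "u = (\<lambda>k \<zeta>. G \<zeta> * w \<zeta> ^ k / \<zeta> ^ Suc k)"
  obtain BG where BG: "BG > 0" "\<And>\<zeta>. \<zeta> \<in> ?S \<Longrightarrow> norm (G \<zeta>) \<le> BG"
    using compact_imp_bounded[OF compact_continuous_image[OF G compact_sphere]]
    unfolding bounded_pos by auto
  have u_le: "norm (u k \<zeta>) \<le> BG / \<rho> * \<kappa> ^ k" if "\<zeta> \<in> ?S" for k \<zeta>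
  proof -
    have "norm (u k \<zeta>) = norm (G \<zeta>) * norm (w \<zeta>) ^ k / \<rho> ^ Suc k"
      using that by (simp add: u_def norm_mult norm_divide norm_power)
    also have "\<dots> \<le> BG * (\<kappa> * \<rho>) ^ k / \<rho> ^ Suc k"
      by (intro divide_right_mono mult_mono power_mono BG w_le that) (use \<rho> BG in auto)
    also have "\<dots> = BG / \<rho> * \<kappa> ^ k" using \<rho> by (simp add: power_mult_distrib field_simps)
    finally show ?thesis .
  qed
  have "summable (\<lambda>k. BG / \<rho> * \<kappa> ^ k)"
    using \<kappa> by (intro summable_mult summable_geometric) auto
  moreover have "continuous_on ?S (u k)" for k
    unfolding u_def using \<rho> by (intro continuous_intros G w) auto
  ultimately have sums: "(\<lambda>k. contour_integral (circlepath 0 \<rho>) (u k)) sums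
      contour_integral (circlepath 0 \<rho>) (\<lambda>\<zeta>. \<Sum>k. u k \<zeta>)"
    using u_le by (intro contour_integral_circlepath_sums[OF \<rho>])
  have geometric: "(\<Sum>k. u k \<zeta>) = G \<zeta> / (\<zeta> - w \<zeta>)" if "\<zeta> \<in> ?S" for \<zeta>
  proof -
    have "\<kappa> * \<rho> < \<rho>" using \<kappa> \<rho> by simp
    then have "norm (w \<zeta>) < \<rho>" using w_le[OF that] by linarith
    then have q: "norm (w \<zeta> / \<zeta>) < 1"
      using that \<rho> by (simp add: norm_divide field_simps)
    have e: "(\<lambda>k. u k \<zeta>) = (\<lambda>k. G \<zeta> / \<zeta> * (w \<zeta> / \<zeta>) ^ k)"
      by (simp add: u_def power_divide field_simps)
    have "(\<Sum>k. u k \<zeta>) = G \<zeta> / \<zeta> * (\<Sum>k. (w \<zeta> / \<zeta>) ^ k)"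
      unfolding e by (rule suminf_mult[OF summable_geometric[OF q]])
    also have "\<dots> = G \<zeta> / \<zeta> * (1 / (1 - w \<zeta> / \<zeta>))"
      using suminf_geometric[OF q] by simp
    also have "\<dots> = G \<zeta> / (\<zeta> - w \<zeta>)"
    proof -
      have "\<zeta> - w \<zeta> \<noteq> 0" "\<zeta> \<noteq> 0" using q that \<rho> by (auto simp: divide_self_if)
      then show ?thesis by (simp add: field_simps)
    qed
    finally show ?thesis .
  qed
  have "contour_integral (circlepath 0 \<rho>) (\<lambda>\<zeta>. \<Sum>k. u k \<zeta>)
      = contour_integral (circlepath 0 \<rho>) (\<lambda>\<zeta>. G \<zeta> / (\<zeta> - w \<zeta>))"
    by (rule contour_integral_eq) (use geometric \<rho> in auto)
  with sums show ?thesis by (simp add: u_def)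
qed

text \<open>The coefficient of \<open>x\<^sup>i y\<^sup>m\<close> in \<open>\<oint> G(\<zeta>) / (\<zeta> - (x - y R(\<zeta>))) d\<zeta>\<close>, see
  \<open>contour_integral_double_series\<close>.\<close>

definition cauchy_coeff ::
    "(complex \<Rightarrow> complex) \<Rightarrow> (complex \<Rightarrow> complex) \<Rightarrow> real \<Rightarrow> nat \<Rightarrow> nat \<Rightarrow> complex" where
  "cauchy_coeff G R \<rho> i m = contour_integral (circlepath 0 \<rho>)
     (\<lambda>\<zeta>. of_nat ((i + m) choose i) * (-1) ^ m * G \<zeta> * R \<zeta> ^ m / \<zeta> ^ (i + m + 1))"

lemma cauchy_coeff_integrable:
  assumes "0 < \<rho>" "continuous_on (sphere 0 \<rho>) G" "continuous_on (sphere 0 \<rho>) R"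
  shows "(\<lambda>\<zeta>. of_nat ((i + m) choose i) * (-1) ^ m * G \<zeta> * R \<zeta> ^ m / \<zeta> ^ (i + m + 1))
    contour_integrable_on circlepath 0 \<rho>"
  using assms by (intro contour_integrable_circlepath_sphere continuous_intros) auto

lemma contour_integral_binomial_expansion:
  fixes G R :: "complex \<Rightarrow> complex"
  assumes "0 < \<rho>" "continuous_on (sphere 0 \<rho>) G" "continuous_on (sphere 0 \<rho>) R"
  shows "contour_integral (circlepath 0 \<rho>) (\<lambda>\<zeta>. G \<zeta> * (x - y * R \<zeta>) ^ k / \<zeta> ^ Suc k)
    = (\<Sum>i\<le>k. x ^ i * y ^ (k - i) * cauchy_coeff G R \<rho> i (k - i))"
proof -
  let ?t = "\<lambda>i \<zeta>. of_nat ((i + (k - i)) choose i) * (-1) ^ (k - i) * G \<zeta> * R \<zeta> ^ (k - i)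
    / \<zeta> ^ (i + (k - i) + 1)"
  have "G \<zeta> * (x - y * R \<zeta>) ^ k / \<zeta> ^ Suc k = (\<Sum>i\<le>k. x ^ i * y ^ (k - i) * ?t i \<zeta>)" for \<zeta>
  proof -
    have "G \<zeta> * (x - y * R \<zeta>) ^ k / \<zeta> ^ Suc k
        = (\<Sum>i\<le>k. G \<zeta> * (of_nat (k choose i) * x ^ i * (- y * R \<zeta>) ^ (k - i)) / \<zeta> ^ Suc k)"
      using binomial_ring[of x "- y * R \<zeta>" k] by (simp add: sum_distrib_left sum_divide_distrib)
    also have "\<dots> = (\<Sum>i\<le>k. x ^ i * y ^ (k - i) * ?t i \<zeta>)"
    proof (rule sum.cong[OF refl])
      fix i assume "i \<in> {..k}"
      then have ik: "i + (k - i) = k" by auto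
      have "(- y * R \<zeta>) ^ (k - i) = y ^ (k - i) * ((-1) ^ (k - i) * R \<zeta> ^ (k - i))"
        by (simp only: power_mult_distrib power_minus[of y "k - i"] mult_ac)
      then show "G \<zeta> * (of_nat (k choose i) * x ^ i * (- y * R \<zeta>) ^ (k - i)) / \<zeta> ^ Suc k
          = x ^ i * y ^ (k - i) * ?t i \<zeta>"
        unfolding ik by (simp add: mult_ac)
    qed
    finally show ?thesis .
  qed
  then have "contour_integral (circlepath 0 \<rho>) (\<lambda>\<zeta>. G \<zeta> * (x - y * R \<zeta>) ^ k / \<zeta> ^ Suc k)
      = contour_integral (circlepath 0 \<rho>) (\<lambda>\<zeta>. \<Sum>i\<le>k. x ^ i * y ^ (k - i) * ?t i \<zeta>)"
    by simp
  also have "\<dots> = (\<Sum>i\<le>k. contour_integral (circlepath 0 \<rho>) (\<lambda>\<zeta>. x ^ i * y ^ (k - i) * ?t i \<zeta>))"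
    by (rule contour_integral_sum[OF finite_atMost],
        rule contour_integrable_lmul[OF cauchy_coeff_integrable[OF assms]])
  also have "\<dots> = (\<Sum>i\<le>k. x ^ i * y ^ (k - i) * cauchy_coeff G R \<rho> i (k - i))"
    unfolding cauchy_coeff_def
    using cauchy_coeff_integrable[OF assms] by (intro sum.cong refl contour_integral_lmul)
  finally show ?thesis .
qed

lemma cauchy_coeff_norm_le:
  assumes \<rho>: "0 < \<rho>" and G: "continuous_on (sphere 0 \<rho>) G" and R: "continuous_on (sphere 0 \<rho>) R"
    and G_le: "\<And>\<zeta>. \<zeta> \<in> sphere 0 \<rho> \<Longrightarrow> norm (G \<zeta>) \<le> BG"
    and R_le: "\<And>\<zeta>. \<zeta> \<in> sphere 0 \<rho> \<Longrightarrow> norm (R \<zeta>) \<le> M"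
  shows "norm (cauchy_coeff G R \<rho> i m) \<le> 2 * pi * BG * real ((i + m) choose i) * M ^ m / \<rho> ^ (i + m)"
proof -
  have BG: "0 \<le> BG" and M: "0 \<le> M"
    using G_le[of "of_real \<rho>"] R_le[of "of_real \<rho>"] \<rho> by (auto intro: order_trans[OF norm_ge_zero])
  have "norm (cauchy_coeff G R \<rho> i m) \<le> real ((i + m) choose i) * BG * M ^ m / \<rho> ^ (i + m + 1) * (2 * pi * \<rho>)"
    unfolding cauchy_coeff_def
  proof (rule has_contour_integral_bound_circlepath[OF has_contour_integral_integral[OF cauchy_coeff_integrable[OF \<rho> G R]]])
    fix \<zeta> :: complex assume "norm (\<zeta> - 0) = \<rho>"
    then have \<zeta>: "\<zeta> \<in> sphere 0 \<rho>" by auto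
    then have "norm (of_nat ((i + m) choose i) * (-1) ^ m * G \<zeta> * R \<zeta> ^ m / \<zeta> ^ (i + m + 1))
        = real ((i + m) choose i) * norm (G \<zeta>) * norm (R \<zeta>) ^ m / \<rho> ^ (i + m + 1)"
      by (simp add: norm_mult norm_divide norm_power)
    also have "\<dots> \<le> real ((i + m) choose i) * BG * M ^ m / \<rho> ^ (i + m + 1)"
      by (intro divide_right_mono mult_mono mult_left_mono power_mono G_le R_le \<zeta>) (use \<rho> BG in auto)
    finally show "norm (of_nat ((i + m) choose i) * (-1) ^ m * G \<zeta> * R \<zeta> ^ m / \<zeta> ^ (i + m + 1))
        \<le> real ((i + m) choose i) * BG * M ^ m / \<rho> ^ (i + m + 1)" .
  qed (use \<rho> BG M in auto)
  also have "\<dots> = 2 * pi * BG * real ((i + m) choose i) * M ^ m / \<rho> ^ (i + m)"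
    using \<rho> by (simp add: field_simps)
  finally show ?thesis .
qed

lemma summable_on_binomial_terms:
  fixes A B :: real
  assumes "0 \<le> A" "0 \<le> B" "A + B < 1"
  shows "(\<lambda>(k, i). real (k choose i) * A ^ i * B ^ (k - i)) summable_on (Sigma UNIV (\<lambda>k. {..k}))"
proof -
  have "(\<lambda>p. real (fst p choose snd p) * A ^ snd p * B ^ (fst p - snd p)) summable_on (Sigma UNIV (\<lambda>k. {..k}))"
  proof (rule summable_on_SigmaI)
    show "((\<lambda>i. real (fst (k, i) choose snd (k, i)) * A ^ snd (k, i) * B ^ (fst (k, i) - snd (k, i)))
        has_sum (A + B) ^ k) {..k}" for k
      by (simp add: binomial_ring)
    have "summable (\<lambda>k. (A + B) ^ k)" by (rule summable_geometric) (use assms in auto)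
    then show "(\<lambda>k. (A + B) ^ k) summable_on UNIV"
      using summable_on_UNIV_nonneg_real_iff[of "\<lambda>k. (A + B) ^ k"] assms by auto
  qed (use assms in auto)
  then show ?thesis by (simp add: split_beta')
qed

lemma cauchy_coeff_regrouped_summable:
  fixes G R :: "complex \<Rightarrow> complex" and x y :: complex
  assumes \<rho>: "0 < \<rho>" and G: "continuous_on (sphere 0 \<rho>) G" and R: "continuous_on (sphere 0 \<rho>) R"
    and R_le: "\<And>\<zeta>. \<zeta> \<in> sphere 0 \<rho> \<Longrightarrow> norm (R \<zeta>) \<le> M"
    and xy: "norm x + norm y * M < \<rho>"
  shows "(\<lambda>(k, i). x ^ i * y ^ (k - i) * cauchy_coeff G R \<rho> i (k - i)) summable_on (Sigma UNIV (\<lambda>k. {..k}))"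
proof -
  have M: "0 \<le> M" using R_le[of "of_real \<rho>"] \<rho> by (auto intro: order_trans[OF norm_ge_zero])
  obtain BG where BG: "BG > 0" "\<And>\<zeta>. \<zeta> \<in> sphere 0 \<rho> \<Longrightarrow> norm (G \<zeta>) \<le> BG"
    using compact_imp_bounded[OF compact_continuous_image[OF G compact_sphere]]
    unfolding bounded_pos by auto
  define A where "A = norm x / \<rho>"
  define B where "B = norm y * M / \<rho>"
  have AB: "0 \<le> A" "0 \<le> B" "A + B < 1"
    using xy \<rho> M by (auto simp: A_def B_def add_divide_distrib[symmetric])
  define h where "h = (\<lambda>(k, i). 2 * pi * BG * (real (k choose i) * A ^ i * B ^ (k - i)))"
  have h_nonneg: "h p \<ge> 0" for p using BG AB by (auto simp: h_def split: prod.splits)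
  have "h summable_on (Sigma UNIV (\<lambda>k. {..k}))"
    unfolding h_def using summable_on_cmult_right[OF summable_on_binomial_terms[OF AB]]
    by (simp add: split_beta')
  with h_nonneg have "(\<lambda>p. norm (h p)) summable_on (Sigma UNIV (\<lambda>k. {..k}))" by simp
  then show ?thesis
  proof (rule abs_summable_summable[OF Infinite_Sum.abs_summable_on_comparison_test])
    fix p :: "nat \<times> nat" assume "p \<in> Sigma UNIV (\<lambda>k. {..k})"
    then obtain k i where p: "p = (k, i)" and ik: "i \<le> k" by auto
    have "norm (x ^ i * y ^ (k - i) * cauchy_coeff G R \<rho> i (k - i))
        = norm x ^ i * norm y ^ (k - i) * norm (cauchy_coeff G R \<rho> i (k - i))"
      by (simp add: norm_mult norm_power)
    also have "\<dots> \<le> norm x ^ i * norm y ^ (k - i)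
        * (2 * pi * BG * real ((i + (k - i)) choose i) * M ^ (k - i) / \<rho> ^ (i + (k - i)))"
      by (intro mult_left_mono cauchy_coeff_norm_le[OF \<rho> G R BG(2) R_le]) auto
    also have "\<dots> = norm (h p)"
      using ik \<rho> h_nonneg[of p] by (simp add: h_def p A_def B_def power_divide power_mult_distrib field_simps
                       flip: power_add)
    finally show "norm ((case p of (k, i) \<Rightarrow> x ^ i * y ^ (k - i) * cauchy_coeff G R \<rho> i (k - i)))
        \<le> norm (h p)"
      by (simp add: p)
  qed
qed

text \<open>Expand \<open>1/(\<zeta> - w)\<close> geometrically in \<open>w = x - y R(\<zeta>)\<close>, then each \<open>w\<^sup>k\<close> binomially,
  and regroup the absolutely summable result by monomials.\<close>

lemma contour_integral_double_series:
  fixes G R :: "complex \<Rightarrow> complex" and x y :: complex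
  assumes \<rho>: "0 < \<rho>" and G: "continuous_on (sphere 0 \<rho>) G" and R: "continuous_on (sphere 0 \<rho>) R"
    and R_le: "\<And>\<zeta>. \<zeta> \<in> sphere 0 \<rho> \<Longrightarrow> norm (R \<zeta>) \<le> M"
    and xy: "norm x + norm y * M < \<rho>"
  shows "((\<lambda>(i, m). x ^ i * y ^ m * cauchy_coeff G R \<rho> i m) has_sum
    contour_integral (circlepath 0 \<rho>) (\<lambda>\<zeta>. G \<zeta> / (\<zeta> - (x - y * R \<zeta>)))) UNIV"
proof -
  define I where "I = contour_integral (circlepath 0 \<rho>) (\<lambda>\<zeta>. G \<zeta> / (\<zeta> - (x - y * R \<zeta>)))"
  define \<kappa> where "\<kappa> = (norm x + norm y * M) / \<rho>"
  have M: "0 \<le> M" using R_le[of "of_real \<rho>"] \<rho> by (auto intro: order_trans[OF norm_ge_zero])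
  have \<kappa>: "0 \<le> \<kappa>" "\<kappa> < 1" using xy \<rho> M by (auto simp: \<kappa>_def)
  have "norm (x - y * R \<zeta>) \<le> \<kappa> * \<rho>" if "\<zeta> \<in> sphere 0 \<rho>" for \<zeta>
  proof -
    have "norm (x - y * R \<zeta>) \<le> norm x + norm y * norm (R \<zeta>)"
      by (metis norm_mult norm_triangle_ineq4)
    also have "\<dots> \<le> norm x + norm y * M" using R_le[OF that] by (simp add: mult_left_mono)
    finally show ?thesis using \<rho> by (simp add: \<kappa>_def)
  qed
  with \<kappa> have sums: "(\<lambda>k. contour_integral (circlepath 0 \<rho>) (\<lambda>\<zeta>. G \<zeta> * (x - y * R \<zeta>) ^ k / \<zeta> ^ Suc k)) sums I"
    unfolding I_def using \<rho> G R
    by (intro contour_integral_geometric_sums[where \<kappa> = \<kappa>] continuous_intros) auto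
  define g where "g = (\<lambda>(k, i). x ^ i * y ^ (k - i) * cauchy_coeff G R \<rho> i (k - i))"
  have "g summable_on (Sigma UNIV (\<lambda>k. {..k}))"
    unfolding g_def by (rule cauchy_coeff_regrouped_summable[OF \<rho> G R R_le xy])
  then have g_sum: "(g has_sum infsum g (Sigma UNIV (\<lambda>k. {..k}))) (Sigma UNIV (\<lambda>k. {..k}))"
    by simp
  have "((\<lambda>k. contour_integral (circlepath 0 \<rho>) (\<lambda>\<zeta>. G \<zeta> * (x - y * R \<zeta>) ^ k / \<zeta> ^ Suc k))
      has_sum infsum g (Sigma UNIV (\<lambda>k. {..k}))) UNIV"
    by (rule has_sum_SigmaD[OF g_sum], unfold contour_integral_binomial_expansion[OF \<rho> G R])
       (simp add: g_def has_sum_finite)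
  then have "infsum g (Sigma UNIV (\<lambda>k. {..k})) = I"
    using sums has_sum_imp_sums sums_unique2 by blast
  with g_sum have "(g has_sum I) (Sigma UNIV (\<lambda>k. {..k}))" by simp
  moreover have "((\<lambda>(i, m). x ^ i * y ^ m * cauchy_coeff G R \<rho> i m) has_sum I) UNIV
      \<longleftrightarrow> (g has_sum I) (Sigma UNIV (\<lambda>k. {..k}))"
    by (rule has_sum_reindex_bij_witness[where i = "\<lambda>(k, i). (i, k - i)" and j = "\<lambda>(i, m). (i + m, i)"])
       (auto simp: g_def)
  ultimately show ?thesis by (simp add: I_def)
qed

lemma holomorphic_divide_by_zero_factor:
  fixes \<phi> :: "complex \<Rightarrow> complex"
  assumes hol\<phi>: "\<phi> holomorphic_on ball 0 \<rho>0" and s: "s \<in> ball 0 \<rho>0" "\<phi> s = 0"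
  defines "u \<equiv> \<lambda>z. if z = s then deriv \<phi> s else (\<phi> z - \<phi> s) / (z - s)"
  shows "u holomorphic_on ball 0 \<rho>0" and "\<phi> z = (z - s) * u z"
    and "z \<in> ball 0 \<rho>0 \<Longrightarrow> deriv \<phi> z = u z + (z - s) * deriv u z"
proof -
  show holu: "u holomorphic_on ball 0 \<rho>0"
    unfolding u_def by (rule pole_lemma[OF hol\<phi>]) (use s in simp)
  show factor: "\<phi> z = (z - s) * u z" for z
    using s(2) by (simp add: u_def)
  assume z: "z \<in> ball 0 \<rho>0"
  have "((\<lambda>z. (z - s) * u z) has_field_derivative (u z + (z - s) * deriv u z)) (at z)"
    by (rule derivative_eq_intros holomorphic_derivI[OF holu open_ball z] refl)+ simp
  moreover have "\<phi> = (\<lambda>z. (z - s) * u z)" using factor by auto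
  ultimately show "deriv \<phi> z = u z + (z - s) * deriv u z" by (simp add: DERIV_imp_deriv)
qed

lemma contour_integral_logderiv_simple_zero:
  fixes \<phi> H :: "complex \<Rightarrow> complex"
  assumes \<rho>: "0 < \<rho>" "\<rho> < \<rho>0"
    and hol\<phi>: "\<phi> holomorphic_on ball 0 \<rho>0" and holH: "H holomorphic_on ball 0 \<rho>0"
    and s: "s \<in> ball 0 \<rho>" "\<phi> s = 0" "deriv \<phi> s \<noteq> 0"
    and only_zero: "\<And>\<zeta>. \<zeta> \<in> cball 0 \<rho> \<Longrightarrow> \<phi> \<zeta> = 0 \<Longrightarrow> \<zeta> = s"
  shows "contour_integral (circlepath 0 \<rho>) (\<lambda>\<zeta>. H \<zeta> * deriv \<phi> \<zeta> / \<phi> \<zeta>) = 2 * of_real pi * \<i> * H s"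
proof -
  have cb: "cball 0 \<rho> \<subseteq> ball (0::complex) \<rho>0" using \<rho> by auto
  have sb: "s \<in> ball 0 \<rho>0" using s \<rho> by auto
  define u where "u = (\<lambda>z. if z = s then deriv \<phi> s else (\<phi> z - \<phi> s) / (z - s))"
  have holu: "u holomorphic_on ball 0 \<rho>0" and factor: "\<And>z. \<phi> z = (z - s) * u z"
    and deriv_factor: "\<And>z. z \<in> ball 0 \<rho>0 \<Longrightarrow> deriv \<phi> z = u z + (z - s) * deriv u z"
    unfolding u_def by (fact holomorphic_divide_by_zero_factor[OF hol\<phi> sb s(2)])+
  have u_nz: "u z \<noteq> 0" if "z \<in> cball 0 \<rho>" for z
  proof (cases "z = s")
    case False
    then have "\<phi> z \<noteq> 0" using only_zero[OF that] by blast
    with False s(2) show ?thesis by (simp add: u_def)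
  qed (use s(3) in \<open>simp add: u_def\<close>)
  have integrand: "H \<zeta> * deriv \<phi> \<zeta> / \<phi> \<zeta> = H \<zeta> / (\<zeta> - s) + H \<zeta> * deriv u \<zeta> / u \<zeta>"
    if "\<zeta> \<in> sphere 0 \<rho>" for \<zeta>
  proof -
    have "\<zeta> \<noteq> s" "u \<zeta> \<noteq> 0" "\<zeta> \<in> ball 0 \<rho>0" using that s u_nz[of \<zeta>] cb by auto
    then show ?thesis
      unfolding factor[of \<zeta>] deriv_factor[OF \<open>\<zeta> \<in> ball 0 \<rho>0\<close>] by (simp add: field_simps)
  qed
  have i1: "((\<lambda>\<zeta>. H \<zeta> / (\<zeta> - s)) has_contour_integral (2 * of_real pi * \<i> * H s)) (circlepath 0 \<rho>)"
  proof (rule Cauchy_integral_circlepath)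
    show "continuous_on (cball 0 \<rho>) H"
      by (rule continuous_on_subset[OF holomorphic_on_imp_continuous_on[OF holH] cb])
    show "H holomorphic_on ball 0 \<rho>" by (rule holomorphic_on_subset[OF holH]) (use \<rho> in auto)
  qed (use s in auto)
  have i2: "((\<lambda>\<zeta>. H \<zeta> * deriv u \<zeta> / u \<zeta>) has_contour_integral 0) (circlepath 0 \<rho>)"
  proof (rule Cauchy_theorem_convex_simple[OF _ convex_cball])
    show "(\<lambda>\<zeta>. H \<zeta> * deriv u \<zeta> / u \<zeta>) holomorphic_on cball 0 \<rho>"
      using u_nz
      by (intro holomorphic_intros holomorphic_on_subset[OF holH cb] holomorphic_on_subset[OF holu cb]
            holomorphic_on_subset[OF holomorphic_deriv[OF holu open_ball] cb]) auto
  qed (use \<rho> in auto)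
  have "((\<lambda>\<zeta>. H \<zeta> / (\<zeta> - s) + H \<zeta> * deriv u \<zeta> / u \<zeta>) has_contour_integral
      (2 * of_real pi * \<i> * H s)) (circlepath 0 \<rho>)"
    using has_contour_integral_add[OF i1 i2] by simp
  then have "((\<lambda>\<zeta>. H \<zeta> * deriv \<phi> \<zeta> / \<phi> \<zeta>) has_contour_integral (2 * of_real pi * \<i> * H s))
      (circlepath 0 \<rho>)"
    by (rule has_contour_integral_eq) (use integrand \<rho> in auto)
  then show ?thesis by (rule contour_integral_unique)
qed

lemma perturbed_identity_root_unique:
  fixes R :: "'a::real_normed_field \<Rightarrow> 'a"
  assumes yL: "norm y * L < 1" and lip: "norm (R z - R w) \<le> L * norm (z - w)"
    and "z + y * R z = x" "w + y * R w = x"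
  shows "z = w"
proof (rule ccontr)
  assume "z \<noteq> w"
  have "z - w = - y * (R z - R w)" using assms(3,4) by (simp add: algebra_simps)
  then have "norm (z - w) = norm y * norm (R z - R w)" by (simp add: norm_mult)
  also have "\<dots> \<le> norm y * L * norm (z - w)" using mult_left_mono[OF lip] by (simp add: mult.assoc)
  finally have "1 * norm (z - w) \<le> (norm y * L) * norm (z - w)" by simp
  with \<open>z \<noteq> w\<close> have "1 \<le> norm y * L" by (simp add: mult_le_cancel_right)
  with yL show False by simp
qed

lemma holomorphic_lipschitz_on_cball:
  assumes "R holomorphic_on ball 0 \<rho>0" "\<rho> < \<rho>0"
    and deriv_le: "\<And>z. z \<in> cball 0 \<rho> \<Longrightarrow> norm (deriv R z) \<le> L"
    and "z \<in> cball 0 \<rho>" "w \<in> cball 0 \<rho>"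
  shows "norm (R z - R w) \<le> L * norm (z - w)"
proof (rule field_differentiable_bound[OF convex_cball _ deriv_le assms(4,5)])
  fix \<xi> :: complex assume "\<xi> \<in> cball 0 \<rho>"
  then have "\<xi> \<in> ball 0 \<rho>0" using assms(2) by auto
  then show "(R has_field_derivative deriv R \<xi>) (at \<xi> within cball 0 \<rho>)"
    using holomorphic_derivI[OF assms(1) open_ball] by (blast intro: has_field_derivative_at_within)
qed

text \<open>A Lagrange-type residue formula: \<open>\<zeta> \<mapsto> \<zeta> + y R(\<zeta>) - x\<close> has exactly one zero \<open>s\<close> in the
  disc, and it is simple, because \<open>|y R'| < 1\<close>.\<close>

lemma contour_integral_implicit_root:
  fixes H R :: "complex \<Rightarrow> complex" and x y s :: complex
  assumes \<rho>: "0 < \<rho>" "\<rho> < \<rho>0"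
    and holH: "H holomorphic_on ball 0 \<rho>0" and holR: "R holomorphic_on ball 0 \<rho>0"
    and deriv_le: "\<And>z. z \<in> cball 0 \<rho> \<Longrightarrow> norm (deriv R z) \<le> L" and yL: "norm y * L < 1"
    and s: "s \<in> ball 0 \<rho>" "s + y * R s = x"
  shows "contour_integral (circlepath 0 \<rho>) (\<lambda>\<zeta>. H \<zeta> * (1 + y * deriv R \<zeta>) / (\<zeta> - (x - y * R \<zeta>)))
    = 2 * of_real pi * \<i> * H s"
proof -
  define \<phi> where "\<phi> = (\<lambda>\<zeta>. \<zeta> + y * R \<zeta> - x)"
  have deriv\<phi>: "deriv \<phi> z = 1 + y * deriv R z" if "z \<in> ball 0 \<rho>0" for z
  proof -
    have "(\<phi> has_field_derivative (1 + y * deriv R z)) (at z)"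
      unfolding \<phi>_def
      by (rule derivative_eq_intros holomorphic_derivI[OF holR open_ball that] refl)+ simp
    then show ?thesis by (rule DERIV_imp_deriv)
  qed
  have only_zero: "\<zeta> = s" if "\<zeta> \<in> cball 0 \<rho>" "\<phi> \<zeta> = 0" for \<zeta>
  proof (rule perturbed_identity_root_unique[OF yL])
    show "norm (R \<zeta> - R s) \<le> L * norm (\<zeta> - s)"
      using s(1) by (intro holomorphic_lipschitz_on_cball[OF holR \<rho>(2) deriv_le that(1)]) auto
    show "\<zeta> + y * R \<zeta> = x" using that(2) by (simp add: \<phi>_def)
  qed (rule s(2))
  have "norm (y * deriv R s) \<le> norm y * L"
    using deriv_le[of s] s by (simp add: norm_mult mult_left_mono)
  with yL have "norm (y * deriv R s) < 1" by linarith
  then have "deriv \<phi> s \<noteq> 0" using deriv\<phi>[of s] s \<rho> by (auto simp: add_eq_0_iff)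
  moreover have "\<phi> holomorphic_on ball 0 \<rho>0" unfolding \<phi>_def by (intro holomorphic_intros holR)
  moreover have "\<phi> s = 0" using s(2) by (simp add: \<phi>_def)
  ultimately have "contour_integral (circlepath 0 \<rho>) (\<lambda>\<zeta>. H \<zeta> * deriv \<phi> \<zeta> / \<phi> \<zeta>) = 2 * of_real pi * \<i> * H s"
    using contour_integral_logderiv_simple_zero[OF \<rho> _ holH s(1) _ _ only_zero] by blast
  moreover have "H \<zeta> * deriv \<phi> \<zeta> / \<phi> \<zeta> = H \<zeta> * (1 + y * deriv R \<zeta>) / (\<zeta> - (x - y * R \<zeta>))"
    if "\<zeta> \<in> sphere 0 \<rho>" for \<zeta>
  proof -
    have "\<zeta> \<in> ball 0 \<rho>0" using that \<rho> by auto
    then show ?thesis by (simp only: deriv\<phi>) (simp add: \<phi>_def algebra_simps)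
  qed
  then have "contour_integral (circlepath 0 \<rho>) (\<lambda>\<zeta>. H \<zeta> * deriv \<phi> \<zeta> / \<phi> \<zeta>)
      = contour_integral (circlepath 0 \<rho>) (\<lambda>\<zeta>. H \<zeta> * (1 + y * deriv R \<zeta>) / (\<zeta> - (x - y * R \<zeta>)))"
    using \<rho> by (intro contour_integral_eq) auto
  ultimately show ?thesis by simp
qed

lemma has_sum_shift_snd:
  fixes x y S :: "'a::{comm_semiring_1, topological_semigroup_mult}"
  assumes "((\<lambda>(i, m). x ^ i * y ^ m * c i m) has_sum S) UNIV"
  shows "((\<lambda>(i, m). x ^ i * y ^ m * (if m = 0 then 0 else c i (m - 1))) has_sum y * S) UNIV"
proof -
  let ?g = "\<lambda>(i, m). x ^ i * y ^ m * (if m = 0 then 0 else c i (m - 1))"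
  let ?h = "\<lambda>(i::nat, m::nat). (i, Suc m)"
  have "((\<lambda>p. y * (case p of (i, m) \<Rightarrow> x ^ i * y ^ m * c i m)) has_sum y * S) UNIV"
    by (rule has_sum_cmult_right[OF assms])
  moreover have "(\<lambda>p. y * (case p of (i, m) \<Rightarrow> x ^ i * y ^ m * c i m)) = ?g \<circ> ?h"
    by (auto simp: fun_eq_iff mult_ac)
  ultimately have "((?g \<circ> ?h) has_sum y * S) UNIV" by simp
  moreover have "inj ?h" by (auto simp: inj_on_def)
  ultimately have "(?g has_sum y * S) (range ?h)" by (simp add: has_sum_reindex)
  moreover have "range ?h = {p. snd p \<noteq> 0}"
  proof (intro set_eqI iffI)
    fix p :: "nat \<times> nat" assume "p \<in> {p. snd p \<noteq> 0}"
    then have "p = ?h (fst p, snd p - 1)" by (cases p) auto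
    then show "p \<in> range ?h" by (metis rangeI)
  qed auto
  ultimately have "(?g has_sum y * S) {p. snd p \<noteq> 0}" by simp
  then show ?thesis by (rule has_sum_cong_neutral[THEN iffD1, rotated -1]) auto
qed

text \<open>The shifted term comes from the factor \<open>y\<close> in the numerator \<open>H(\<zeta>) (1 + y R'(\<zeta>))\<close> of
  \<open>contour_integral_implicit_root\<close>.\<close>

definition implicit_coeff ::
    "(complex \<Rightarrow> complex) \<Rightarrow> (complex \<Rightarrow> complex) \<Rightarrow> real \<Rightarrow> nat \<Rightarrow> nat \<Rightarrow> complex" where
  "implicit_coeff H R \<rho> i m = (cauchy_coeff H R \<rho> i m
      + (if m = 0 then 0 else cauchy_coeff (\<lambda>\<zeta>. H \<zeta> * deriv R \<zeta>) R \<rho> i (m - 1))) / (2 * of_real pi * \<i>)"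

text \<open>By \<open>contour_integral_implicit_root\<close>, \<open>H(s)\<close> is a contour integral whose integrand
  expands as a double power series in \<open>(x, y)\<close>.\<close>

lemma implicit_root_double_series:
  fixes H R :: "complex \<Rightarrow> complex" and x y s :: complex
  assumes \<rho>: "0 < \<rho>" "\<rho> < \<rho>0"
    and holH: "H holomorphic_on ball 0 \<rho>0" and holR: "R holomorphic_on ball 0 \<rho>0"
    and deriv_le: "\<And>z. z \<in> cball 0 \<rho> \<Longrightarrow> norm (deriv R z) \<le> L" and R0: "R 0 = 0"
    and xy: "norm x + norm y * (L * \<rho>) < \<rho>" and yL: "norm y * L < 1"
    and s: "s \<in> ball 0 \<rho>" "s + y * R s = x"
  shows "((\<lambda>(i, m). implicit_coeff H R \<rho> i m * x ^ i * y ^ m) has_sum H s) UNIV"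
proof -
  let ?\<gamma> = "circlepath 0 \<rho>"
  let ?S = "sphere (0::complex) \<rho>"
  let ?den = "\<lambda>\<zeta>. \<zeta> - (x - y * R \<zeta>)"
  have Sb: "?S \<subseteq> ball 0 \<rho>0" using \<rho> by auto
  have R_le: "norm (R \<zeta>) \<le> L * \<rho>" if "\<zeta> \<in> ?S" for \<zeta>
    using holomorphic_lipschitz_on_cball[OF holR \<rho>(2) deriv_le, of \<zeta> 0] that \<rho> R0 by auto
  have den: "?den \<zeta> \<noteq> 0" if "\<zeta> \<in> ?S" for \<zeta>
  proof
    assume "?den \<zeta> = 0"
    then have "\<zeta> = x - y * R \<zeta>" by simp
    then have "norm \<zeta> \<le> norm x + norm y * norm (R \<zeta>)"
      by (metis norm_mult norm_triangle_ineq4)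
    also have "\<dots> \<le> norm x + norm y * (L * \<rho>)" using R_le[OF that] by (simp add: mult_left_mono)
    finally show False using xy that by simp
  qed
  have contH: "continuous_on ?S H"
    by (rule continuous_on_subset[OF holomorphic_on_imp_continuous_on[OF holH] Sb])
  have contR: "continuous_on ?S R"
    by (rule continuous_on_subset[OF holomorphic_on_imp_continuous_on[OF holR] Sb])
  have contdR: "continuous_on ?S (deriv R)"
    by (rule continuous_on_subset[OF holomorphic_on_imp_continuous_on[OF holomorphic_deriv[OF holR open_ball]] Sb])
  have int1: "(\<lambda>\<zeta>. H \<zeta> / ?den \<zeta>) contour_integrable_on ?\<gamma>"
    and int2: "(\<lambda>\<zeta>. H \<zeta> * deriv R \<zeta> / ?den \<zeta>) contour_integrable_on ?\<gamma>"
    using \<rho> den by (auto intro!: contour_integrable_circlepath_sphere continuous_intros contH contR contdR)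
  have "contour_integral ?\<gamma> (\<lambda>\<zeta>. H \<zeta> * (1 + y * deriv R \<zeta>) / ?den \<zeta>)
      = contour_integral ?\<gamma> (\<lambda>\<zeta>. H \<zeta> / ?den \<zeta> + y * (H \<zeta> * deriv R \<zeta> / ?den \<zeta>))"
    by (rule contour_integral_eq) (simp add: field_simps add_divide_distrib)
  also have "\<dots> = contour_integral ?\<gamma> (\<lambda>\<zeta>. H \<zeta> / ?den \<zeta>)
      + y * contour_integral ?\<gamma> (\<lambda>\<zeta>. H \<zeta> * deriv R \<zeta> / ?den \<zeta>)"
    by (simp only: contour_integral_add[OF int1 contour_integrable_lmul[OF int2]] contour_integral_lmul[OF int2])
  finally have split: "contour_integral ?\<gamma> (\<lambda>\<zeta>. H \<zeta> / ?den \<zeta>)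
      + y * contour_integral ?\<gamma> (\<lambda>\<zeta>. H \<zeta> * deriv R \<zeta> / ?den \<zeta>) = 2 * of_real pi * \<i> * H s"
    using contour_integral_implicit_root[OF \<rho> holH holR deriv_le yL s] by simp
  have A1: "((\<lambda>(i, m). x ^ i * y ^ m * cauchy_coeff H R \<rho> i m) has_sum
      contour_integral ?\<gamma> (\<lambda>\<zeta>. H \<zeta> / ?den \<zeta>)) UNIV"
    by (rule contour_integral_double_series[OF \<rho>(1) contH contR R_le xy])
  have A2: "((\<lambda>(i, m). x ^ i * y ^ m * cauchy_coeff (\<lambda>\<zeta>. H \<zeta> * deriv R \<zeta>) R \<rho> i m) has_sum
      contour_integral ?\<gamma> (\<lambda>\<zeta>. H \<zeta> * deriv R \<zeta> / ?den \<zeta>)) UNIV"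
    by (rule contour_integral_double_series[OF \<rho>(1) _ contR R_le xy]) (intro continuous_intros contH contdR)
  have "((\<lambda>p. (case p of (i, m) \<Rightarrow> x ^ i * y ^ m * cauchy_coeff H R \<rho> i m)
      + (case p of (i, m) \<Rightarrow> x ^ i * y ^ m
          * (if m = 0 then 0 else cauchy_coeff (\<lambda>\<zeta>. H \<zeta> * deriv R \<zeta>) R \<rho> i (m - 1))))
      has_sum (2 * of_real pi * \<i> * H s)) UNIV"
    using has_sum_add[OF A1 has_sum_shift_snd[OF A2]] split by simp
  from has_sum_cmult_right[OF this, of "inverse (2 * of_real pi * \<i>)"] show ?thesis
    by (simp add: implicit_coeff_def split_beta' field_simps)
qed

lemma powser_on_complex_extension:
  assumes "powser_on b r f"
  shows "(\<lambda>z. \<Sum>n. complex_of_real (b n) * z ^ n) holomorphic_on ball 0 r"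
    and "\<And>t. \<bar>t\<bar> < r \<Longrightarrow> (\<Sum>n. complex_of_real (b n) * complex_of_real t ^ n) = complex_of_real (f t)"
proof -
  show "(\<lambda>z. \<Sum>n. complex_of_real (b n) * z ^ n) holomorphic_on ball 0 r"
    unfolding holomorphic_on_def
  proof
    fix z :: complex assume z: "z \<in> ball 0 r"
    define K where "K = (norm z + r) / 2"
    have K: "norm z < K" "K < r" using z by (auto simp: K_def)
    moreover have "0 < K" using K norm_ge_zero[of z] by linarith
    ultimately have "summable (\<lambda>n. b n * K ^ n)" using powser_on_summable(2)[OF assms, of K] by simp
    then have "summable (\<lambda>n. complex_of_real (b n) * complex_of_real K ^ n)"
      using summable_of_real[of "\<lambda>n. b n * K ^ n"] by simp
    then have "DERIV (\<lambda>z. \<Sum>n. complex_of_real (b n) * z ^ n) z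
        :> (\<Sum>n. diffs (\<lambda>n. complex_of_real (b n)) n * z ^ n)"
      by (rule termdiffs_strong) (use K in simp)
    then show "(\<lambda>z. \<Sum>n. complex_of_real (b n) * z ^ n) field_differentiable at z within ball 0 r"
      using field_differentiable_def field_differentiable_at_within by blast
  qed
  fix t :: real assume t: "\<bar>t\<bar> < r"
  have "(\<Sum>n. complex_of_real (b n * t ^ n)) = complex_of_real (\<Sum>n. b n * t ^ n)"
    by (rule suminf_of_real[symmetric, OF powser_on_summable(2)[OF assms t]])
  then show "(\<Sum>n. complex_of_real (b n) * complex_of_real t ^ n) = complex_of_real (f t)"
    using powser_on_eq_suminf[OF assms t] by simp
qed

lemma has_sum_Re_double_powser:
  assumes "((\<lambda>(i, m). c i m * complex_of_real x ^ i * complex_of_real y ^ m) has_sum complex_of_real v) UNIV"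
  shows "((\<lambda>(i, m). Re (c i m) * x ^ i * y ^ m) has_sum v) UNIV"
proof -
  have "(\<lambda>p. Re (case p of (i, m) \<Rightarrow> c i m * complex_of_real x ^ i * complex_of_real y ^ m))
      = (\<lambda>(i, m). Re (c i m) * x ^ i * y ^ m)"
    by (auto simp: fun_eq_iff simp flip: of_real_power of_real_mult)
  with has_sum_bounded_linear[OF bounded_linear_Re assms] show ?thesis by simp
qed

lemma powser2_on_add:
  assumes "powser2_on a r f" "powser2_on b r g"
  shows "powser2_on (\<lambda>i j. a i j + b i j) r (\<lambda>p. f p + g p)"
  unfolding powser2_on_def
proof (intro allI impI)
  fix x y :: real assume "\<bar>x\<bar> < r \<and> \<bar>y\<bar> < r"
  with assms have "((\<lambda>(i, j). a i j * x ^ i * y ^ j) has_sum f (x, y)) UNIV"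
    "((\<lambda>(i, j). b i j * x ^ i * y ^ j) has_sum g (x, y)) UNIV"
    unfolding powser2_on_def by blast+
  from has_sum_add[OF this]
  show "((\<lambda>(i, j). (a i j + b i j) * x ^ i * y ^ j) has_sum f (x, y) + g (x, y)) UNIV"
    by (simp add: split_beta' distrib_right)
qed

lemma powser2_on_times_snd:
  assumes "powser2_on a r f"
  shows "powser2_on (\<lambda>i j. if j = 0 then 0 else a i (j - 1)) r (\<lambda>p. snd p * f p)"
  unfolding powser2_on_def
proof (intro allI impI)
  fix x y :: real assume "\<bar>x\<bar> < r \<and> \<bar>y\<bar> < r"
  then have "((\<lambda>(i, j). a i j * x ^ i * y ^ j) has_sum f (x, y)) UNIV"
    using assms unfolding powser2_on_def by blast
  then have "((\<lambda>(i, j). x ^ i * y ^ j * a i j) has_sum f (x, y)) UNIV"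
    by (simp add: split_beta' mult_ac)
  from has_sum_shift_snd[OF this]
  show "((\<lambda>(i, j). (if j = 0 then 0 else a i (j - 1)) * x ^ i * y ^ j) has_sum snd (x, y) * f (x, y)) UNIV"
    by (simp add: split_beta' mult_ac)
qed

lemma perturbed_identity_root_exists:
  fixes r :: "real \<Rightarrow> real"
  assumes \<rho>: "0 < \<rho>" and cont: "continuous_on {-\<rho>..\<rho>} r"
    and small: "\<And>t. \<bar>t\<bar> \<le> \<rho> \<Longrightarrow> \<bar>y * r t\<bar> \<le> \<bar>t\<bar> / 2" and x: "\<bar>x\<bar> \<le> \<rho> / 2"
  obtains t where "\<bar>t\<bar> \<le> \<rho>" "t + y * r t = x"
proof -
  have "-\<rho> + y * r (-\<rho>) \<le> x" "x \<le> \<rho> + y * r \<rho>"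
    using small[of "-\<rho>"] small[of \<rho>] x \<rho> by (auto simp: abs_le_iff)
  moreover have "continuous_on {-\<rho>..\<rho>} (\<lambda>t. t + y * r t)"
    by (intro continuous_intros cont)
  ultimately obtain t where "-\<rho> \<le> t" "t \<le> \<rho>" "t + y * r t = x"
    using IVT'[of "\<lambda>t. t + y * r t" "-\<rho>" x \<rho>] \<rho> by auto
  then show ?thesis by (intro that) auto
qed

lemma implicit_root_real_double_series:
  fixes H R :: "complex \<Rightarrow> complex" and h r :: "real \<Rightarrow> real"
  assumes \<rho>: "0 < \<rho>" "\<rho> < \<rho>0"
    and holH: "H holomorphic_on ball 0 \<rho>0" and holR: "R holomorphic_on ball 0 \<rho>0"
    and deriv_le: "\<And>z. z \<in> cball 0 \<rho> \<Longrightarrow> norm (deriv R z) \<le> L"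
    and R_real: "\<And>t. \<bar>t\<bar> < \<rho>0 \<Longrightarrow> R (of_real t) = of_real (r t)"
    and H_real: "\<And>t. \<bar>t\<bar> < \<rho>0 \<Longrightarrow> H (of_real t) = of_real (h t)" and r0: "r 0 = 0"
    and xy: "\<bar>x\<bar> + \<bar>y\<bar> * (L * \<rho>) < \<rho>" and yL: "\<bar>y\<bar> * L < 1"
    and s: "\<bar>s\<bar> < \<rho>" "s + y * r s = x"
  shows "((\<lambda>(i, m). Re (implicit_coeff H R \<rho> i m) * x ^ i * y ^ m) has_sum h s) UNIV"
proof (rule has_sum_Re_double_powser)
  have R0: "R 0 = 0" using R_real[of 0] \<rho> r0 by simp
  have xy': "norm (complex_of_real x) + norm (complex_of_real y) * (L * \<rho>) < \<rho>" using xy by simp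
  have yL': "norm (complex_of_real y) * L < 1" using yL by simp
  have s_ball: "complex_of_real s \<in> ball 0 \<rho>" using s(1) by simp
  have "R (complex_of_real s) = complex_of_real (r s)" using R_real[of s] s(1) \<rho> by simp
  then have s_root: "complex_of_real s + complex_of_real y * R (complex_of_real s) = complex_of_real x"
    using arg_cong[OF s(2), of complex_of_real] by simp
  note implicit_root_double_series[OF \<rho> holH holR deriv_le R0 xy' yL' s_ball s_root]
  moreover have "H (complex_of_real s) = complex_of_real (h s)" using H_real[of s] s(1) \<rho> by simp
  ultimately show "((\<lambda>(i, m). implicit_coeff H R \<rho> i m * complex_of_real x ^ i * complex_of_real y ^ m)
      has_sum complex_of_real (h s)) UNIV"
    by simp
qed

definition perturbed_root :: "real \<Rightarrow> (real \<Rightarrow> real) \<Rightarrow> real \<Rightarrow> real \<Rightarrow> real" where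
  "perturbed_root \<rho> r x y = (THE t. \<bar>t\<bar> \<le> \<rho> \<and> t + y * r t = x)"

lemma perturbed_root:
  fixes r :: "real \<Rightarrow> real"
  assumes \<rho>: "0 < \<rho>" and r_lip: "\<And>t1 t2. \<bar>t1\<bar> \<le> \<rho> \<Longrightarrow> \<bar>t2\<bar> \<le> \<rho> \<Longrightarrow> \<bar>r t1 - r t2\<bar> \<le> L * \<bar>t1 - t2\<bar>"
    and r0: "r 0 = 0" and yL: "\<bar>y\<bar> * L \<le> 1 / 2" and x: "\<bar>x\<bar> \<le> \<rho> / 4"
  shows "\<bar>perturbed_root \<rho> r x y\<bar> \<le> \<rho> / 2 \<and> perturbed_root \<rho> r x y + y * r (perturbed_root \<rho> r x y) = x"
proof -
  have "0 \<le> L * \<rho>" using r_lip[of \<rho> 0] \<rho> by (auto intro: order_trans[OF abs_ge_zero])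
  then have L: "0 \<le> L" using \<rho> by (simp add: zero_le_mult_iff)
  have r_cont: "continuous_on {-(\<rho> / 2)..\<rho> / 2} r"
    by (rule lipschitz_on_continuous_on[of L]) (use r_lip L in \<open>auto simp: lipschitz_on_def dist_real_def\<close>)
  have small: "\<bar>y * r t\<bar> \<le> \<bar>t\<bar> / 2" if "\<bar>t\<bar> \<le> \<rho> / 2" for t
  proof -
    have "\<bar>y * r t\<bar> \<le> \<bar>y\<bar> * (L * \<bar>t\<bar>)"
      using r_lip[of t 0] that \<rho> r0 by (simp add: abs_mult mult_left_mono)
    also have "\<dots> = (\<bar>y\<bar> * L) * \<bar>t\<bar>" by simp
    also have "\<dots> \<le> 1 / 2 * \<bar>t\<bar>" using yL by (intro mult_right_mono) auto
    finally show ?thesis by simp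
  qed
  have "\<bar>x\<bar> \<le> \<rho> / 2 / 2" "0 < \<rho> / 2" using x \<rho> by auto
  then obtain t where t: "\<bar>t\<bar> \<le> \<rho> / 2" "t + y * r t = x"
    using perturbed_identity_root_exists[OF _ r_cont small] by blast
  have "perturbed_root \<rho> r x y = t"
    unfolding perturbed_root_def
  proof (rule the_equality)
    show "\<bar>t\<bar> \<le> \<rho> \<and> t + y * r t = x" using t \<rho> by simp
    show "t' = t" if "\<bar>t'\<bar> \<le> \<rho> \<and> t' + y * r t' = x" for t'
      using yL that t \<rho> r_lip[of t' t] by (intro perturbed_identity_root_unique[of y L r t' t x]) auto
  qed
  with t show ?thesis by simp
qed

lemma implicit_root_analytic:
  fixes R :: "complex \<Rightarrow> complex" and r :: "real \<Rightarrow> real"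
  assumes \<rho>0: "0 < \<rho>0" and holR: "R holomorphic_on ball 0 \<rho>0"
    and R_real: "\<And>t. \<bar>t\<bar> < \<rho>0 \<Longrightarrow> R (of_real t) = of_real (r t)" and r0: "r 0 = 0"
  obtains \<delta> S where "0 < \<delta>"
    and "\<And>x y. \<bar>x\<bar> < \<delta> \<Longrightarrow> \<bar>y\<bar> < \<delta> \<Longrightarrow> \<bar>S (x, y)\<bar> < \<rho>0 \<and> S (x, y) + y * r (S (x, y)) = x"
    and "\<And>H h. H holomorphic_on ball 0 \<rho>0 \<Longrightarrow> (\<And>t. \<bar>t\<bar> < \<rho>0 \<Longrightarrow> H (of_real t) = of_real (h t)) \<Longrightarrow>
      \<exists>a. powser2_on a \<delta> (\<lambda>p. h (S p))"
proof -
  define \<rho> where "\<rho> = \<rho>0 / 2"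
  have \<rho>: "0 < \<rho>" "\<rho> < \<rho>0" using \<rho>0 by (auto simp: \<rho>_def)
  have "continuous_on (cball 0 \<rho>) (deriv R)"
    by (rule continuous_on_subset[OF holomorphic_on_imp_continuous_on[OF holomorphic_deriv[OF holR open_ball]]])
       (use \<rho> in auto)
  then have "bounded (deriv R ` cball 0 \<rho>)"
    by (intro compact_imp_bounded compact_continuous_image compact_cball)
  then obtain L where L: "L > 0" "\<And>z. z \<in> cball 0 \<rho> \<Longrightarrow> norm (deriv R z) \<le> L"
    unfolding bounded_pos by auto
  define \<delta> where "\<delta> = min (\<rho> / 4) (1 / (2 * L))"
  have \<delta>: "0 < \<delta>" "\<delta> \<le> \<rho> / 4" "\<delta> \<le> 1 / (2 * L)" using \<rho> L by (auto simp: \<delta>_def)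
  have "\<delta> * L \<le> 1 / 2" using \<delta>(3) L(1) by (simp add: field_simps)
  then have yL: "\<bar>y\<bar> * L < 1 / 2" if "\<bar>y\<bar> < \<delta>" for y
    using mult_strict_right_mono[OF that L(1)] by linarith
  have r_lip: "\<bar>r t1 - r t2\<bar> \<le> L * \<bar>t1 - t2\<bar>" if "\<bar>t1\<bar> \<le> \<rho>" "\<bar>t2\<bar> \<le> \<rho>" for t1 t2
  proof -
    have "norm (R (of_real t1) - R (of_real t2)) \<le> L * norm (of_real t1 - of_real t2 :: complex)"
      by (rule holomorphic_lipschitz_on_cball[OF holR \<rho>(2) L(2)]) (use that in auto)
    then show ?thesis using R_real that \<rho> by (simp flip: of_real_diff)
  qed
  define S where "S = (\<lambda>(x, y). perturbed_root \<rho> r x y)"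
  have S: "\<bar>S (x, y)\<bar> \<le> \<rho> / 2 \<and> S (x, y) + y * r (S (x, y)) = x" if "\<bar>x\<bar> < \<delta>" "\<bar>y\<bar> < \<delta>" for x y
    unfolding S_def prod.case using yL[OF that(2)] that(1) \<delta>
    by (intro perturbed_root[OF \<rho>(1) r_lip r0]) auto
  show ?thesis
  proof (rule that[OF \<delta>(1)])
    show "\<bar>S (x, y)\<bar> < \<rho>0 \<and> S (x, y) + y * r (S (x, y)) = x" if "\<bar>x\<bar> < \<delta>" "\<bar>y\<bar> < \<delta>" for x y
      using S[OF that] \<rho> by auto
  next
    fix H h
    assume holH: "H holomorphic_on ball 0 \<rho>0" and H_real: "\<And>t. \<bar>t\<bar> < \<rho>0 \<Longrightarrow> H (of_real t) = of_real (h t)"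
    have series: "((\<lambda>(i, m). Re (implicit_coeff H R \<rho> i m) * x ^ i * y ^ m) has_sum h (S (x, y))) UNIV"
      if xy: "\<bar>x\<bar> < \<delta>" "\<bar>y\<bar> < \<delta>" for x y
    proof (rule implicit_root_real_double_series[OF \<rho> holH holR L(2) R_real H_real r0])
      have "\<bar>y\<bar> * L * \<rho> \<le> 1 / 2 * \<rho>" using yL[OF xy(2)] \<rho> by (intro mult_right_mono) auto
      moreover have "\<bar>y\<bar> * (L * \<rho>) = \<bar>y\<bar> * L * \<rho>" by (rule mult.assoc[symmetric])
      ultimately show "\<bar>x\<bar> + \<bar>y\<bar> * (L * \<rho>) < \<rho>" using xy \<delta> by linarith
      show "\<bar>y\<bar> * L < 1" using yL[OF xy(2)] by simp
      show "\<bar>S (x, y)\<bar> < \<rho>" "S (x, y) + y * r (S (x, y)) = x" using S[OF xy] \<rho> by auto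
    qed
    have "powser2_on (\<lambda>i m. Re (implicit_coeff H R \<rho> i m)) \<delta> (\<lambda>p. h (S p))"
      unfolding powser2_on_def using series by simp
    then show "\<exists>a. powser2_on a \<delta> (\<lambda>p. h (S p))" by (rule exI[of "\<lambda>a. powser2_on a \<delta> (\<lambda>p. h (S p))"])
  qed
qed

lemma slope_functions_has_derivative:
  fixes p :: "real \<Rightarrow> real"
  assumes dp: "(p has_real_derivative p') (at t)" and p: "\<bar>p t\<bar> < 1"
  defines "q \<equiv> sqrt (1 - (p t)\<^sup>2)"
  shows "((\<lambda>t. p t / sqrt (1 - (p t)\<^sup>2)) has_real_derivative p' / q ^ 3) (at t)"
    and "((\<lambda>t. 1 / sqrt (1 - (p t)\<^sup>2)) has_real_derivative p t * p' / q ^ 3) (at t)"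
proof -
  have pos: "0 < 1 - (p t)\<^sup>2" using p by (simp add: abs_square_less_1)
  then have q: "0 < q" "q\<^sup>2 = 1 - (p t)\<^sup>2" by (simp_all add: q_def)
  have "((\<lambda>t. 1 - (p t)\<^sup>2) has_real_derivative - (2 * p t * p')) (at t)"
    using dp by (auto intro!: derivative_eq_intros)
  from DERIV_chain2[OF DERIV_real_sqrt[OF pos] this]
  have dq: "((\<lambda>t. sqrt (1 - (p t)\<^sup>2)) has_real_derivative - p t * p' / q) (at t)"
    by (simp add: q_def field_simps)
  have "((\<lambda>t. p t / sqrt (1 - (p t)\<^sup>2)) has_real_derivative (p' * q - p t * (- p t * p' / q)) / (q * q)) (at t)"
    using DERIV_divide[OF dp dq] q by (simp add: q_def)
  moreover have "(p' * q - p t * (- p t * p' / q)) / (q * q) = p' * (q\<^sup>2 + (p t)\<^sup>2) / q ^ 3"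
    using q(1) by (simp add: field_simps power2_eq_square power3_eq_cube)
  moreover have "q\<^sup>2 + (p t)\<^sup>2 = 1" using q(2) by simp
  ultimately show "((\<lambda>t. p t / sqrt (1 - (p t)\<^sup>2)) has_real_derivative p' / q ^ 3) (at t)"
    by (auto elim: DERIV_cong)
  have "((\<lambda>t. 1 / sqrt (1 - (p t)\<^sup>2)) has_real_derivative (0 * q - 1 * (- p t * p' / q)) / (q * q)) (at t)"
    unfolding q_def by (rule DERIV_divide[OF DERIV_const dq[unfolded q_def]]) (use pos in simp)
  moreover have "(0 * q - 1 * (- p t * p' / q)) / (q * q) = p t * p' / q ^ 3"
    using q by (simp add: field_simps power3_eq_cube)
  ultimately show "((\<lambda>t. 1 / sqrt (1 - (p t)\<^sup>2)) has_real_derivative p t * p' / q ^ 3) (at t)"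
    by (rule DERIV_cong)
qed

lemma implicit_graph_partials:
  fixes S :: "real \<times> real \<Rightarrow> real" and x y :: real
  defines "s \<equiv> S (x, y)"
  assumes Sx: "((\<lambda>t. S (t, y)) has_real_derivative Sx) (at x)"
    and Sy: "((\<lambda>t. S (x, t)) has_real_derivative Sy) (at y)"
    and root_x: "\<forall>\<^sub>F t in nhds x. S (t, y) + y * r (S (t, y)) = t"
    and root_y: "\<forall>\<^sub>F t in nhds y. S (x, t) + t * r (S (x, t)) = x"
    and d\<psi>: "(\<psi> has_real_derivative p) (at s)" and dr: "(r has_real_derivative r') (at s)"
    and dw: "(w has_real_derivative p * r') (at s)"
  shows "((\<lambda>t. \<psi> (S (t, y)) + y * w (S (t, y))) has_real_derivative p) (at x)"
    and "((\<lambda>t. \<psi> (S (x, t)) + t * w (S (x, t))) has_real_derivative w s - p * r s) (at y)"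
proof -
  have "((\<lambda>t. S (t, y) + y * r (S (t, y))) has_real_derivative Sx + y * (r' * Sx)) (at x)"
    using DERIV_chain2[OF dr[unfolded s_def] Sx] Sx by (auto intro!: derivative_eq_intros)
  moreover have "((\<lambda>t. S (t, y) + y * r (S (t, y))) has_real_derivative 1) (at x)"
    using DERIV_ident by (subst DERIV_cong_ev[OF refl root_x refl])
  ultimately have ex: "Sx * (1 + y * r') = 1" by (auto dest: DERIV_unique simp: algebra_simps)
  have "((\<lambda>t. S (x, t) + t * r (S (x, t))) has_real_derivative Sy + (r s + y * (r' * Sy))) (at y)"
    using DERIV_chain2[OF dr[unfolded s_def] Sy] Sy unfolding s_def by (auto intro!: derivative_eq_intros)
  moreover have "((\<lambda>t. S (x, t) + t * r (S (x, t))) has_real_derivative 0) (at y)"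
    using DERIV_const by (subst DERIV_cong_ev[OF refl root_y refl])
  ultimately have ey: "Sy * (1 + y * r') = - r s" by (auto dest: DERIV_unique simp: algebra_simps)
  have "((\<lambda>t. \<psi> (S (t, y)) + y * w (S (t, y))) has_real_derivative p * (Sx * (1 + y * r'))) (at x)"
    using DERIV_chain2[OF d\<psi>[unfolded s_def] Sx] DERIV_chain2[OF dw[unfolded s_def] Sx]
    by (auto intro!: derivative_eq_intros simp: algebra_simps)
  with ex show "((\<lambda>t. \<psi> (S (t, y)) + y * w (S (t, y))) has_real_derivative p) (at x)" by simp
  have "((\<lambda>t. \<psi> (S (x, t)) + t * w (S (x, t))) has_real_derivative p * (Sy * (1 + y * r')) + w s) (at y)"
    using DERIV_chain2[OF d\<psi>[unfolded s_def] Sy] DERIV_chain2[OF dw[unfolded s_def] Sy] unfolding s_def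
    by (auto intro!: derivative_eq_intros simp: algebra_simps)
  with ey show "((\<lambda>t. \<psi> (S (x, t)) + t * w (S (x, t))) has_real_derivative w s - p * r s) (at y)"
    by (simp add: algebra_simps)
qed

lemma holomorphic_slope_functions:
  fixes P :: "complex \<Rightarrow> complex"
  assumes holP: "P holomorphic_on ball 0 \<rho>" and P_lt: "\<And>z. z \<in> ball 0 \<rho> \<Longrightarrow> norm (P z) < 1"
    and P_real: "\<And>t. \<bar>t\<bar> < \<rho> \<Longrightarrow> P (of_real t) = of_real (p t)"
  shows "(\<lambda>z. P z / csqrt (1 - (P z)\<^sup>2)) holomorphic_on ball 0 \<rho>"
    and "(\<lambda>z. 1 / csqrt (1 - (P z)\<^sup>2)) holomorphic_on ball 0 \<rho>"
    and "\<And>t. \<bar>t\<bar> < \<rho> \<Longrightarrow> P (of_real t) / csqrt (1 - (P (of_real t))\<^sup>2) = of_real (p t / sqrt (1 - (p t)\<^sup>2))"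
    and "\<And>t. \<bar>t\<bar> < \<rho> \<Longrightarrow> 1 / csqrt (1 - (P (of_real t))\<^sup>2) = of_real (1 / sqrt (1 - (p t)\<^sup>2))"
proof -
  have Re_pos: "Re (1 - (P z)\<^sup>2) > 0" if "z \<in> ball 0 \<rho>" for z
  proof -
    have "norm ((P z)\<^sup>2) < 1" using P_lt[OF that] by (simp add: norm_power power_less_one_iff)
    then show ?thesis using complex_Re_le_cmod[of "(P z)\<^sup>2"] by simp
  qed
  then have nz: "csqrt (1 - (P z)\<^sup>2) \<noteq> 0" if "z \<in> ball 0 \<rho>" for z
    using that by fastforce
  have "1 - (P z)\<^sup>2 \<notin> \<real>\<^sub>\<le>\<^sub>0" if "z \<in> ball 0 \<rho>" for z
    using Re_pos[OF that] by (auto simp: complex_nonpos_Reals_iff)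
  then have "(\<lambda>z. csqrt (1 - (P z)\<^sup>2)) holomorphic_on ball 0 \<rho>"
    by (intro holomorphic_on_csqrt' holomorphic_intros holP)
  then show "(\<lambda>z. P z / csqrt (1 - (P z)\<^sup>2)) holomorphic_on ball 0 \<rho>"
    and "(\<lambda>z. 1 / csqrt (1 - (P z)\<^sup>2)) holomorphic_on ball 0 \<rho>"
    using nz by (auto intro!: holomorphic_intros holP)
  have "csqrt (1 - (P (of_real t))\<^sup>2) = of_real (sqrt (1 - (p t)\<^sup>2))" if "\<bar>t\<bar> < \<rho>" for t
  proof -
    have "complex_of_real t \<in> ball 0 \<rho>" using that by simp
    then have "\<bar>p t\<bar> < 1" using P_lt P_real[OF that] by fastforce
    then show ?thesis using P_real[OF that] by (simp add: abs_square_le_1 flip: of_real_power of_real_diff)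
  qed
  then show "\<And>t. \<bar>t\<bar> < \<rho> \<Longrightarrow> P (of_real t) / csqrt (1 - (P (of_real t))\<^sup>2) = of_real (p t / sqrt (1 - (p t)\<^sup>2))"
    and "\<And>t. \<bar>t\<bar> < \<rho> \<Longrightarrow> 1 / csqrt (1 - (P (of_real t))\<^sup>2) = of_real (1 / sqrt (1 - (p t)\<^sup>2))"
    using P_real by simp_all
qed

lemma eikonal_graph_partials:
  fixes \<psi> p :: "real \<Rightarrow> real" and S :: "real \<times> real \<Rightarrow> real"
  defines "r \<equiv> \<lambda>t. p t / sqrt (1 - (p t)\<^sup>2)"
    and "f \<equiv> \<lambda>pt. \<psi> (S pt) + snd pt * (1 / sqrt (1 - (p (S pt))\<^sup>2))"
  assumes d\<psi>: "\<And>t. \<bar>t\<bar> < \<rho> \<Longrightarrow> (\<psi> has_real_derivative p t) (at t)"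
    and dp: "\<And>t. \<bar>t\<bar> < \<rho> \<Longrightarrow> (p has_real_derivative p' t) (at t)"
    and p_lt: "\<And>t. \<bar>t\<bar> < \<rho> \<Longrightarrow> \<bar>p t\<bar> < 1"
    and S: "powser2_on a \<delta> S"
    and S_root: "\<And>x y. \<bar>x\<bar> < \<delta> \<Longrightarrow> \<bar>y\<bar> < \<delta> \<Longrightarrow> \<bar>S (x, y)\<bar> < \<rho> \<and> S (x, y) + y * r (S (x, y)) = x"
    and xy: "\<bar>x\<bar> < \<delta>" "\<bar>y\<bar> < \<delta>"
  shows "pdx f (x, y) = p (S (x, y))" and "pdy f (x, y) = sqrt (1 - (p (S (x, y)))\<^sup>2)"
proof -
  define w where "w = (\<lambda>t. 1 / sqrt (1 - (p t)\<^sup>2))"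
  define s where "s = S (x, y)"
  define q where "q = sqrt (1 - (p s)\<^sup>2)"
  have s: "\<bar>s\<bar> < \<rho>" using S_root[OF xy] by (simp add: s_def)
  have q: "0 < q" "q\<^sup>2 = 1 - (p s)\<^sup>2"
    using p_lt[OF s] less_imp_le[OF p_lt[OF s]] by (simp_all add: q_def abs_square_less_1 abs_square_le_1)
  have near: "\<forall>\<^sub>F t in nhds u. \<bar>t\<bar> < \<delta>" if "\<bar>u\<bar> < \<delta>" for u :: real
  proof -
    have "\<forall>\<^sub>F t in nhds u. t \<in> {-\<delta><..<\<delta>}"
      by (rule eventually_nhds_in_open) (use that in auto)
    then show ?thesis by eventually_elim auto
  qed
  have root_x: "\<forall>\<^sub>F t in nhds x. S (t, y) + y * r (S (t, y)) = t"
    using near[OF xy(1)] by eventually_elim (use S_root xy in blast)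
  have root_y: "\<forall>\<^sub>F t in nhds y. S (x, t) + t * r (S (x, t)) = x"
    using near[OF xy(2)] by eventually_elim (use S_root xy in blast)
  have dr: "(r has_real_derivative p' s / q ^ 3) (at s)"
    and "(w has_real_derivative p s * p' s / q ^ 3) (at s)"
    unfolding r_def w_def q_def by (rule slope_functions_has_derivative[OF dp[OF s] p_lt[OF s]])+
  then have dw: "(w has_real_derivative p s * (p' s / q ^ 3)) (at s)" by simp
  note partials = implicit_graph_partials[OF powser2_dx_has_derivative[OF S xy]
      powser2_dy_has_derivative[OF S xy] root_x root_y d\<psi>[OF s[unfolded s_def]]
      dr[unfolded s_def] dw[unfolded s_def]]
  have "w s = 1 / q" "r s = p s / q" by (simp_all add: w_def r_def q_def)
  then have "w s - p s * r s = (1 - (p s)\<^sup>2) / q" using q(1) by (simp add: field_simps power2_eq_square)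
  also have "\<dots> = q\<^sup>2 / q" using q(2) by simp
  also have "\<dots> = q" using q(1) by (simp add: power2_eq_square)
  finally have "w s - p s * r s = q" .
  then show "pdx f (x, y) = p (S (x, y))" and "pdy f (x, y) = sqrt (1 - (p (S (x, y)))\<^sup>2)"
    using DERIV_imp_deriv[OF partials(1)] DERIV_imp_deriv[OF partials(2)]
    by (simp_all add: pdx_def pdy_def f_def w_def s_def q_def)
qed

lemma C_omega_02_holomorphic_data:
  assumes "\<psi> \<in> C_omega_02"
  obtains \<rho> p p' \<Psi> P where "0 < \<rho>" "\<psi> 0 = 0" "p 0 = 0"
    and "\<And>t. \<bar>t\<bar> < \<rho> \<Longrightarrow> (\<psi> has_real_derivative p t) (at t)"
    and "\<And>t. \<bar>t\<bar> < \<rho> \<Longrightarrow> (p has_real_derivative p' t) (at t)"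
    and "\<Psi> holomorphic_on ball 0 \<rho>" "\<And>t. \<bar>t\<bar> < \<rho> \<Longrightarrow> \<Psi> (of_real t) = of_real (\<psi> t)"
    and "P holomorphic_on ball 0 \<rho>" "\<And>t. \<bar>t\<bar> < \<rho> \<Longrightarrow> P (of_real t) = of_real (p t)"
    and "\<And>z. z \<in> ball 0 \<rho> \<Longrightarrow> norm (P z) < 1"
proof -
  obtain a0 r0 where r0: "r0 > 0" and \<psi>: "powser_on a0 r0 \<psi>"
    using assms unfolding C_omega_02_def real_analytic_at0_1_def powser_on_def by blast
  have \<psi>0: "\<psi> 0 = 0" and d\<psi>0: "deriv \<psi> 0 = 0" using assms by (auto simp: C_omega_02_def)
  define p where "p = (\<lambda>t. \<Sum>i. diffs a0 i * t ^ i)"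
  have p: "powser_on (diffs a0) r0 p" unfolding p_def by (rule powser_on_diffs[OF \<psi>])
  have d\<psi>: "(\<psi> has_real_derivative p t) (at t)" if "\<bar>t\<bar> < r0" for t
    unfolding p_def by (rule powser_on_has_real_derivative[OF \<psi> that])
  have p0: "p 0 = 0" using d\<psi>[of 0] r0 d\<psi>0 DERIV_imp_deriv by fastforce
  define \<Psi> where "\<Psi> = (\<lambda>z. \<Sum>n. complex_of_real (a0 n) * z ^ n)"
  define P where "P = (\<lambda>z. \<Sum>n. complex_of_real (diffs a0 n) * z ^ n)"
  have hol\<Psi>: "\<Psi> holomorphic_on ball 0 r0" and \<Psi>_real: "\<And>t. \<bar>t\<bar> < r0 \<Longrightarrow> \<Psi> (of_real t) = of_real (\<psi> t)"
    unfolding \<Psi>_def using powser_on_complex_extension[OF \<psi>] by auto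
  have holP: "P holomorphic_on ball 0 r0" and P_real: "\<And>t. \<bar>t\<bar> < r0 \<Longrightarrow> P (of_real t) = of_real (p t)"
    unfolding P_def using powser_on_complex_extension[OF p] by auto
  have "isCont P 0"
    using holomorphic_on_imp_continuous_on[OF holP] r0 by (simp add: continuous_on_interior)
  moreover have "P 0 = 0" using P_real[of 0] r0 p0 by simp
  ultimately have "(P \<longlongrightarrow> 0) (nhds 0)" by (metis isCont_def tendsto_at_iff_tendsto_nhds)
  then have "\<forall>\<^sub>F z in nhds 0. dist (P z) 0 < 1" by (rule tendstoD) simp
  then obtain \<rho>1 where "\<rho>1 > 0" and \<rho>1: "\<And>z. dist z 0 < \<rho>1 \<Longrightarrow> dist (P z) 0 < 1"
    unfolding eventually_nhds_metric by blast
  define \<rho> where "\<rho> = min \<rho>1 r0"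
  have \<rho>: "0 < \<rho>" "\<rho> \<le> r0" using \<open>\<rho>1 > 0\<close> r0 by (auto simp: \<rho>_def)
  have ball_sub: "ball (0::complex) \<rho> \<subseteq> ball 0 r0" using \<rho> by auto
  show ?thesis
  proof (rule that[of \<rho> p "\<lambda>t. \<Sum>i. diffs (diffs a0) i * t ^ i" \<Psi> P])
    show "0 < \<rho>" "\<psi> 0 = 0" "p 0 = 0" by (fact \<rho>(1) \<psi>0 p0)+
    show "(\<psi> has_real_derivative p t) (at t)" if "\<bar>t\<bar> < \<rho>" for t
      using d\<psi> that \<rho> by simp
    show "(p has_real_derivative (\<Sum>i. diffs (diffs a0) i * t ^ i)) (at t)" if "\<bar>t\<bar> < \<rho>" for t
      using powser_on_has_real_derivative[OF p] that \<rho> by simp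
    show "\<Psi> holomorphic_on ball 0 \<rho>" "P holomorphic_on ball 0 \<rho>"
      using hol\<Psi> holP ball_sub by (auto intro: holomorphic_on_subset)
    show "\<Psi> (of_real t) = of_real (\<psi> t)" "P (of_real t) = of_real (p t)" if "\<bar>t\<bar> < \<rho>" for t
      using \<Psi>_real P_real that \<rho> by simp_all
    show "norm (P z) < 1" if "z \<in> ball 0 \<rho>" for z
      using \<rho>1[of z] that by (auto simp: \<rho>_def dist_norm)
  qed
qed

lemma Lambda_omega_from_holomorphic_data:
  assumes \<rho>: "0 < \<rho>" and \<psi>0: "\<psi> 0 = 0" and p0: "p 0 = 0"
    and d\<psi>: "\<And>t. \<bar>t\<bar> < \<rho> \<Longrightarrow> (\<psi> has_real_derivative p t) (at t)"
    and dp: "\<And>t. \<bar>t\<bar> < \<rho> \<Longrightarrow> (p has_real_derivative p' t) (at t)"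
    and hol\<Psi>: "\<Psi> holomorphic_on ball 0 \<rho>" and \<Psi>_real: "\<And>t. \<bar>t\<bar> < \<rho> \<Longrightarrow> \<Psi> (of_real t) = of_real (\<psi> t)"
    and holP: "P holomorphic_on ball 0 \<rho>" and P_real: "\<And>t. \<bar>t\<bar> < \<rho> \<Longrightarrow> P (of_real t) = of_real (p t)"
    and P_lt: "\<And>z. z \<in> ball 0 \<rho> \<Longrightarrow> norm (P z) < 1"
  shows "\<exists>f \<in> Lambda_omega. \<forall>\<^sub>F x in nhds 0. f (x, 0) = \<psi> x"
proof -
  define r where "r = (\<lambda>t. p t / sqrt (1 - (p t)\<^sup>2))"
  define w where "w = (\<lambda>t. 1 / sqrt (1 - (p t)\<^sup>2))"
  note slope = holomorphic_slope_functions[OF holP P_lt P_real]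
  have R_real: "\<And>t. \<bar>t\<bar> < \<rho> \<Longrightarrow> P (of_real t) / csqrt (1 - (P (of_real t))\<^sup>2) = of_real (r t)"
    and W_real: "\<And>t. \<bar>t\<bar> < \<rho> \<Longrightarrow> 1 / csqrt (1 - (P (of_real t))\<^sup>2) = of_real (w t)"
    using slope(3,4) by (auto simp: r_def w_def)
  have "r 0 = 0" using p0 by (simp add: r_def)
  show ?thesis
  proof (rule implicit_root_analytic[OF \<rho>(1) slope(1) R_real \<open>r 0 = 0\<close>])
    fix \<delta> and S :: "real \<times> real \<Rightarrow> real"
    assume \<delta>: "0 < \<delta>"
      and S_root: "\<And>x y. \<bar>x\<bar> < \<delta> \<Longrightarrow> \<bar>y\<bar> < \<delta> \<Longrightarrow> \<bar>S (x, y)\<bar> < \<rho> \<and> S (x, y) + y * r (S (x, y)) = x"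
      and S_analytic: "\<And>H h. H holomorphic_on ball 0 \<rho> \<Longrightarrow> (\<And>t. \<bar>t\<bar> < \<rho> \<Longrightarrow> H (of_real t) = of_real (h t)) \<Longrightarrow>
        \<exists>a. powser2_on a \<delta> (\<lambda>p. h (S p))"
    from S_analytic[OF hol\<Psi> \<Psi>_real]
    obtain a\<psi> where a\<psi>: "powser2_on a\<psi> \<delta> (\<lambda>p. \<psi> (S p))" ..
    from S_analytic[OF slope(2) W_real]
    obtain aw where aw: "powser2_on aw \<delta> (\<lambda>p. w (S p))" ..
    obtain aS where aS: "powser2_on aS \<delta> S"
      using S_analytic[OF holomorphic_on_ident, of "\<lambda>t. t"] by auto
    define f where "f = (\<lambda>pt. \<psi> (S pt) + snd pt * w (S pt))"
    have "real_analytic_at0_2 f"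
      using powser2_on_imp_real_analytic_at0_2[OF powser2_on_add[OF a\<psi> powser2_on_times_snd[OF aw]] \<delta>]
      unfolding f_def .
    have p_lt: "\<bar>p t\<bar> < 1" if "\<bar>t\<bar> < \<rho>" for t
      using P_lt[of "of_real t"] P_real[of t] that by simp
    have partials: "pdx f (x, y) = p (S (x, y))" "pdy f (x, y) = sqrt (1 - (p (S (x, y)))\<^sup>2)"
      if "\<bar>x\<bar> < \<delta>" "\<bar>y\<bar> < \<delta>" for x y
      using eikonal_graph_partials[OF d\<psi> dp p_lt aS S_root[unfolded r_def] that]
      unfolding f_def w_def by simp_all
    have S_axis: "S (x, 0) = x" if "\<bar>x\<bar> < \<delta>" for x
      using S_root[OF that, of 0] \<delta> by simp
    have "f \<in> Lambda_omega"
      unfolding Lambda_omega_def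
    proof (intro CollectI conjI)
      show "real_analytic_at0_2 f" by fact
      show "f (0, 0) = 0" "pdx f (0, 0) = 0" "pdy f (0, 0) = 1"
        using S_axis[of 0] partials[of 0 0] \<delta> \<psi>0 p0 by (simp_all add: f_def)
      have "1 - (pdx f (x, y))\<^sup>2 - (pdy f (x, y))\<^sup>2 = 0" if "\<bar>x\<bar> < \<delta>" "\<bar>y\<bar> < \<delta>" for x y
        using partials[OF that] p_lt[of "S (x, y)"] S_root[OF that] by (simp add: abs_square_le_1)
      then show "\<forall>\<^sub>F p in nhds (0, 0). 1 - (pdx f p)\<^sup>2 - (pdy f p)\<^sup>2 = 0"
        unfolding eventually_nhds_0_square_iff using \<delta> by blast
    qed
    moreover have "\<forall>\<^sub>F x in nhds 0. f (x, 0) = \<psi> x"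
      unfolding eventually_nhds_metric dist_real_def using \<delta> S_axis by (auto simp: f_def)
    ultimately show ?thesis by blast
  qed
qed

theorem C_omega_02_extends_to_Lambda_omega:
  assumes "\<psi> \<in> C_omega_02"
  shows "\<exists>f \<in> Lambda_omega. \<forall>\<^sub>F x in nhds 0. f (x, 0) = \<psi> x"
  by (rule C_omega_02_holomorphic_data[OF assms], rule Lambda_omega_from_holomorphic_data)

theorem proposition1p2:
  shows "(\<forall>f \<in> Lambda_omega. (\<lambda>x. f (x, 0)) \<in> C_omega_02)
    \<and> (\<forall>f \<in> Lambda_omega. \<forall>g \<in> Lambda_omega.
          (\<forall>\<^sub>F x in nhds 0. f (x, 0) = g (x, 0)) \<longrightarrow>
          (\<forall>\<^sub>F p in nhds (0, 0). f p = g p))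
    \<and> (\<forall>\<psi> \<in> C_omega_02. \<exists>f \<in> Lambda_omega. \<forall>\<^sub>F x in nhds 0. f (x, 0) = \<psi> x)"
  using Lambda_omega_restrict_x_axis Lambda_omega_unique C_omega_02_extends_to_Lambda_omega by blast

end
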